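(* Let $A\in\mathbb{R}^{m\times n}$ with $m\ge n$ and $\operatorname{rank}(A)=n$, let $G\in\mathbb{R}^{n\times n}$ be symmetric positive definite, let $1\le l\le n$, and let $\Omega\in\mathbb{R}^{m\times l}$ have i.i.d. $N(0,1)$ entries. Define $$\widehat T:=I_n-G^{1/2}A^T\Omega(\Omega^TAGA^T\Omega)^{-1}\Omega^TAG^{1/2}$$ (well-defined almost surely). Then $\widehat T$ is an orthogonal projector almost surely and $$\mathbb{E}[\widehat T]\preceq I_n-\frac{G^{1/2}A^TAG^{1/2}}{m\,\lambda_{\max}(AGA^T)}\prec I_n .$$
   Context: $\preceq$, $\prec$ denote the Loewner order (positive semidefinite, resp. positive definite, difference). $\lambda_{\max}$ is the largest eigenvalue. *)

theory Defs
  imports "HOL-Analysis.Analysis" "HOL-Probability.Probability"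
begin

definition sym_mat :: "real^'n^'n \<Rightarrow> bool" where
  "sym_mat M \<longleftrightarrow> transpose M = M"

definition psd_mat :: "real^'n^'n \<Rightarrow> bool" where
  "psd_mat M \<longleftrightarrow> sym_mat M \<and> (\<forall>x. 0 \<le> x \<bullet> (M *v x))"

definition pd_mat :: "real^'n^'n \<Rightarrow> bool" where
  "pd_mat M \<longleftrightarrow> sym_mat M \<and> (\<forall>x. x \<noteq> 0 \<longrightarrow> 0 < x \<bullet> (M *v x))"

definition loewner_le :: "real^'n^'n \<Rightarrow> real^'n^'n \<Rightarrow> bool" where
  "loewner_le A B \<longleftrightarrow> psd_mat (B - A)"

definition loewner_less :: "real^'n^'n \<Rightarrow> real^'n^'n \<Rightarrow> bool" where
  "loewner_less A B \<longleftrightarrow> pd_mat (B - A)"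

definition mat_sqrt :: "real^'n^'n \<Rightarrow> real^'n^'n" where
  "mat_sqrt G = (THE S. psd_mat S \<and> S ** S = G)"

definition lambda_max :: "real^'n^'n \<Rightarrow> real" where
  "lambda_max M = Max {c. \<exists>v. v \<noteq> 0 \<and> M *v v = c *\<^sub>R v}"

definition orth_projector :: "real^'n^'n \<Rightarrow> bool" where
  "orth_projector P \<longleftrightarrow> P ** P = P \<and> transpose P = P"

definition mat_expectation :: "'s measure \<Rightarrow> ('s \<Rightarrow> real^'n^'m) \<Rightarrow> real^'n^'m" where
  "mat_expectation M X = (\<chi> i j. integral\<^sup>L M (\<lambda>\<omega>. X \<omega> $ i $ j))"

definition T_hat :: "real^'n^'m \<Rightarrow> real^'n^'n \<Rightarrow> real^'l^'m \<Rightarrow> real^'n^'n" where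
  "T_hat A G \<Omega> = mat 1 - mat_sqrt G ** transpose A ** \<Omega>
      ** matrix_inv (transpose \<Omega> ** A ** G ** transpose A ** \<Omega>)
      ** transpose \<Omega> ** A ** mat_sqrt G"

end

theory Submission
  imports Defs
begin

text \<open>Write \<open>X = G\<^sup>1\<^sup>/\<^sup>2 A\<^sup>T \<Omega>\<close>. Then \<open>T_hat = I - P\<close> where \<open>P = X (X\<^sup>T X)\<^sup>-\<^sup>1 X\<^sup>T\<close> is
  the orthogonal projector onto the column space of \<open>X\<close>. Since \<open>A G\<^sup>1\<^sup>/\<^sup>2\<close> is injective,
  the columns of \<open>X\<close> are almost surely independent: adding one Gaussian column at a
  time, a dependence forces it into a fixed hyperplane, a null event.

  For the expectation bound, \<open>P\<close> dominates the projector onto a column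
  \<open>x = G\<^sup>1\<^sup>/\<^sup>2 A\<^sup>T g\<close> of \<open>X\<close>, so
  \<open>v\<^sup>T P v \<ge> (w\<^sup>T g)\<^sup>2 / (x\<^sup>T x) \<ge> (w\<^sup>T g)\<^sup>2 / (\<lambda>\<^sub>m\<^sub>a\<^sub>x(A G A\<^sup>T) |g|\<^sup>2)\<close> with
  \<open>w = A G\<^sup>1\<^sup>/\<^sup>2 v\<close>. Invariance of the Gaussian law under sign changes and permutations of
  entries gives \<open>E[g g\<^sup>T / |g|\<^sup>2] = I / m\<close>, hence \<open>E[v\<^sup>T P v] \<ge> |w|\<^sup>2 / (m \<lambda>\<^sub>m\<^sub>a\<^sub>x)\<close>.\<close>

section \<open>Symmetric matrices\<close>

lemma inner_matrix_vector_transpose: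
  fixes A :: "real^'n^'m"
  shows "x \<bullet> (A *v y) = (transpose A *v x) \<bullet> y"
  by (simp add: dot_lmul_matrix)

lemma inner_vector_matrix_mult:
  fixes A :: "real^'n^'m"
  shows "x \<bullet> (y v* A) = (A *v x) \<bullet> y"
  by (metis dot_lmul_matrix inner_commute)

lemma sym_mat_inner_commute:
  fixes K :: "real^'n^'n"
  assumes "sym_mat K"
  shows "x \<bullet> (K *v y) = (K *v x) \<bullet> y"
  using assms inner_matrix_vector_transpose[of x K y] by (simp add: sym_mat_def)

lemma pd_mat_imp_psd_mat: "pd_mat G \<Longrightarrow> psd_mat G"
  unfolding pd_mat_def psd_mat_def by (metis inner_zero_left order.refl order.strict_implies_order)

lemma linear_coeff_eq_0_if_quadratic_nonpos:
  fixes a b :: real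
  assumes "\<And>t. a * t + b * t^2 \<le> 0"
  shows "a = 0"
proof (rule ccontr)
  assume "a \<noteq> 0"
  define s where "s = 1 / (\<bar>b\<bar> + 1)"
  have "s > 0" unfolding s_def by (simp add: add_pos_nonneg)
  have "\<bar>b * s\<bar> < 1" by (simp add: s_def abs_mult)
  then have "1 + b * s > 0" by linarith
  with \<open>s > 0\<close> \<open>a \<noteq> 0\<close> have "a^2 * s * (1 + b * s) > 0" by simp
  moreover have "a * (a * s) + b * (a * s)^2 = a^2 * s * (1 + b * s)"
    by (simp add: power2_eq_square algebra_simps)
  ultimately show False using assms[of "a * s"] by linarith
qed

text \<open>A maximiser of the Rayleigh quotient on the unit sphere of \<open>W\<close> is an eigenvector.\<close>
lemma sym_mat_eigenvector_in_invariant_subspace: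
  fixes K :: "real^'n^'n"
  assumes K: "sym_mat K" and W: "subspace W" "W \<noteq> {0}" and inv: "\<And>x. x \<in> W \<Longrightarrow> K *v x \<in> W"
  obtains u c where "u \<in> W" "norm u = 1" "K *v u = c *\<^sub>R u"
proof -
  define f where "f x = x \<bullet> (K *v x)" for x :: "real^'n"
  let ?S = "sphere 0 1 \<inter> W"
  have cS: "compact ?S"
    by (intro compact_Int_closed) (auto simp: closed_subspace W)
  obtain w where "w \<in> W" "w \<noteq> 0" using W subspace_0[OF W(1)] by auto
  then have "w /\<^sub>R norm w \<in> ?S" using W by (auto simp: subspace_scale)
  then have neS: "?S \<noteq> {}" by blast
  have cf: "continuous_on ?S f" unfolding f_def
    by (intro continuous_on_inner continuous_on_id
        continuous_on_compose2[OF matrix_vector_mult_linear_continuous_on]) auto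
  obtain u where u: "u \<in> ?S" and umax: "\<And>y. y \<in> ?S \<Longrightarrow> f y \<le> f u"
    using continuous_attains_sup[OF cS neS cf] by blast
  define \<mu> where "\<mu> = f u"
  have uW: "u \<in> W" and uu: "u \<bullet> u = 1" using u by (auto simp: norm_eq_1)
  have le: "f z \<le> \<mu> * (z \<bullet> z)" if "z \<in> W" for z
  proof (cases "z = 0")
    case False
    have "z /\<^sub>R norm z \<in> ?S" using False that W by (auto simp: subspace_scale)
    then have "f (z /\<^sub>R norm z) \<le> \<mu>" using umax \<mu>_def by blast
    moreover have "f (z /\<^sub>R norm z) = f z / (norm z)^2"
      by (simp add: f_def matrix_vector_mult_scaleR power2_eq_square divide_inverse)
    ultimately show ?thesis using False by (simp add: divide_le_eq power2_norm_eq_inner)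
  qed (simp add: f_def)
  have stationary: "u \<bullet> (K *v v) = \<mu> * (u \<bullet> v)" if v: "v \<in> W" for v
  proof -
    have "2 * (u \<bullet> (K *v v) - \<mu> * (u \<bullet> v)) * t + (v \<bullet> (K *v v) - \<mu> * (v \<bullet> v)) * t^2 \<le> 0" for t
    proof -
      have "u + t *\<^sub>R v \<in> W" using v uW W by (simp add: subspace_add subspace_scale)
      then have "f (u + t *\<^sub>R v) \<le> \<mu> * ((u + t *\<^sub>R v) \<bullet> (u + t *\<^sub>R v))" by (rule le)
      moreover have "v \<bullet> (K *v u) = u \<bullet> (K *v v)"
        using sym_mat_inner_commute[OF K, of v u] by (simp add: inner_commute)
      ultimately show ?thesis
        using uu by (simp add: f_def \<mu>_def matrix_vector_right_distrib matrix_vector_mult_scaleR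
            inner_add_left inner_add_right inner_commute algebra_simps power2_eq_square)
    qed
    then have "2 * (u \<bullet> (K *v v) - \<mu> * (u \<bullet> v)) = 0"
      by (rule linear_coeff_eq_0_if_quadratic_nonpos)
    then show ?thesis by simp
  qed
  define r where "r = K *v u - \<mu> *\<^sub>R u"
  have "r \<in> W" unfolding r_def using inv[OF uW] uW W by (simp add: subspace_diff subspace_scale)
  moreover have "r \<bullet> v = 0" if "v \<in> W" for v
    using stationary[OF that] sym_mat_inner_commute[OF K, of u v] by (simp add: r_def inner_diff_left)
  ultimately have "r = 0" by (metis inner_eq_zero_iff)
  then have "K *v u = \<mu> *\<^sub>R u" by (simp add: r_def)
  then show thesis using that uW u by auto
qed

definition orthonormal_basis :: "'a::real_inner set \<Rightarrow> bool" where
  "orthonormal_basis B \<longleftrightarrow> finite B \<and> pairwise orthogonal B \<and> (\<forall>b\<in>B. norm b = 1) \<and> span B = UNIV"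

lemma orthonormal_basis_eqI:
  assumes "orthonormal_basis B" "\<And>b. b \<in> B \<Longrightarrow> x \<bullet> b = y \<bullet> b"
  shows "x = y"
proof (rule vector_eq_dot_span)
  show "x \<in> span B" "y \<in> span B" using assms(1) by (simp_all add: orthonormal_basis_def)
  show "b \<bullet> x = b \<bullet> y" if "b \<in> B" for b using assms(2)[OF that] by (simp add: inner_commute)
qed

lemma orthonormal_basis_inner_expand:
  assumes "orthonormal_basis B"
  shows "x \<bullet> y = (\<Sum>b\<in>B. (x \<bullet> b) * (y \<bullet> b))"
proof -
  have "y = (\<Sum>b\<in>B. (y \<bullet> b) *\<^sub>R b)"
    using assms orthonormal_basis_expand[of B y] by (simp add: orthonormal_basis_def)
  then have "x \<bullet> y = x \<bullet> (\<Sum>b\<in>B. (y \<bullet> b) *\<^sub>R b)" by simp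
  then show ?thesis by (simp add: inner_sum_right mult.commute)
qed

lemma orthonormal_basis_coeff:
  assumes "orthonormal_basis B" "b0 \<in> B"
  shows "(\<Sum>b\<in>B. f b *\<^sub>R b) \<bullet> b0 = f b0"
proof -
  have "(\<Sum>b\<in>B. f b *\<^sub>R b) \<bullet> b0 = (\<Sum>b\<in>B. if b = b0 then f b0 else 0)"
    unfolding inner_sum_left
    by (rule sum.cong) (use assms in \<open>auto simp: orthonormal_basis_def pairwise_def orthogonal_def norm_eq_1\<close>)
  then show ?thesis using assms by (simp add: orthonormal_basis_def)
qed

lemma sym_mat_eigenbasis_of_invariant_subspace:
  fixes K :: "real^'n^'n"
  assumes K: "sym_mat K"
  shows "subspace W \<Longrightarrow> (\<And>x. x \<in> W \<Longrightarrow> K *v x \<in> W) \<Longrightarrow>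
    \<exists>B. B \<subseteq> W \<and> pairwise orthogonal B \<and> (\<forall>b\<in>B. norm b = 1 \<and> (\<exists>c. K *v b = c *\<^sub>R b)) \<and> span B = W"
proof (induction "dim W" arbitrary: W rule: less_induct)
  case less
  show ?case
  proof (cases "W = {0}")
    case True
    then show ?thesis by (intro exI[of _ "{}"]) auto
  next
    case False
    obtain u c where u: "u \<in> W" "norm u = 1" "K *v u = c *\<^sub>R u"
      using sym_mat_eigenvector_in_invariant_subspace[OF K less.prems(1) False less.prems(2)] .
    have uu: "u \<bullet> u = 1" using u by (simp add: norm_eq_1)
    define W' where "W' = {x\<in>W. u \<bullet> x = 0}"
    have sW': "subspace W'" using less.prems(1) unfolding W'_def subspace_def
      by (auto simp: inner_add_right)
    have iW': "K *v x \<in> W'" if "x \<in> W'" for x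
    proof -
      have "u \<bullet> (K *v x) = c * (u \<bullet> x)" using sym_mat_inner_commute[OF K, of u x] u by simp
      then show ?thesis using that less.prems(2) by (auto simp: W'_def)
    qed
    have "W' \<subseteq> W" "u \<notin> W'" using uu by (auto simp: W'_def)
    then have "span W' \<subset> span W" using u(1) sW' less.prems(1) by (metis psubsetI span_eq_iff)
    then have "dim W' < dim W" by (rule dim_psubset)
    from less.hyps[OF this sW' iW'] obtain B' where B': "B' \<subseteq> W'" "pairwise orthogonal B'"
      "\<forall>b\<in>B'. norm b = 1 \<and> (\<exists>c. K *v b = c *\<^sub>R b)" "span B' = W'" by blast
    have "insert u B' \<subseteq> W" using u B'(1) by (auto simp: W'_def)
    moreover have "pairwise orthogonal (insert u B')"
      using B'(1,2) by (auto simp: pairwise_insert W'_def orthogonal_def inner_commute)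
    moreover have "\<forall>b\<in>insert u B'. norm b = 1 \<and> (\<exists>c. K *v b = c *\<^sub>R b)" using u B'(3) by auto
    moreover have "span (insert u B') = W"
    proof
      show "span (insert u B') \<subseteq> W" using calculation(1) less.prems(1) by (simp add: span_minimal)
      show "W \<subseteq> span (insert u B')"
      proof
        fix x assume x: "x \<in> W"
        have "x - (u \<bullet> x) *\<^sub>R u \<in> W'" using x u(1) less.prems(1) uu
          by (auto simp: W'_def subspace_diff subspace_scale inner_diff_right)
        then show "x \<in> span (insert u B')" using B'(4) span_breakdown_eq by blast
      qed
    qed
    ultimately show ?thesis by blast
  qed
qed

lemma sym_mat_eigenbasis:
  fixes K :: "real^'n^'n"
  assumes K: "sym_mat K"
  obtains B where "orthonormal_basis B" "\<And>b. b \<in> B \<Longrightarrow> K *v b = (b \<bullet> (K *v b)) *\<^sub>R b"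
proof -
  obtain B where B: "pairwise orthogonal B" "\<forall>b\<in>B. norm b = 1 \<and> (\<exists>c. K *v b = c *\<^sub>R b)"
    "span B = UNIV"
    using sym_mat_eigenbasis_of_invariant_subspace[OF K, of UNIV] by (auto simp: subspace_UNIV)
  have "0 \<notin> B" using B(2) by force
  then have "independent B" using B(1) pairwise_orthogonal_independent by blast
  then have "finite B" using independent_bound by blast
  then have "orthonormal_basis B" using B by (simp add: orthonormal_basis_def)
  moreover have "K *v b = (b \<bullet> (K *v b)) *\<^sub>R b" if "b \<in> B" for b
  proof -
    from B(2) that obtain c where c: "K *v b = c *\<^sub>R b" and "norm b = 1" by blast
    then have "b \<bullet> (K *v b) = c" by (simp add: norm_eq_1)
    then show ?thesis using c by simp
  qed
  ultimately show thesis using that by blast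
qed

lemma psd_mat_sqrt_exists:
  fixes G :: "real^'n^'n"
  assumes G: "psd_mat G"
  obtains S where "psd_mat S" "S ** S = G"
proof -
  have K: "sym_mat G" using G by (simp add: psd_mat_def)
  obtain B where B: "orthonormal_basis B" and eig: "\<And>b. b \<in> B \<Longrightarrow> G *v b = (b \<bullet> (G *v b)) *\<^sub>R b"
    using sym_mat_eigenbasis[OF K] by blast
  define ev where "ev b = b \<bullet> (G *v b)" for b
  have ev0: "ev b \<ge> 0" for b using G by (simp add: psd_mat_def ev_def)
  define S :: "real^'n^'n" where "S = (\<chi> i j. \<Sum>b\<in>B. sqrt (ev b) * (b$i * b$j))"
  have Sx: "S *v x = (\<Sum>b\<in>B. (sqrt (ev b) * (b \<bullet> x)) *\<^sub>R b)" for x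
    by (simp add: S_def vec_eq_iff matrix_vector_mult_def inner_vec_def sum_distrib_left
        sum_distrib_right mult_ac sum_component) (intro allI sum.swap)
  have Sb: "(S *v x) \<bullet> b = sqrt (ev b) * (b \<bullet> x)" if "b \<in> B" for x b
    unfolding Sx by (rule orthonormal_basis_coeff[OF B that])
  have "x \<bullet> (S *v x) \<ge> 0" for x
  proof -
    have "x \<bullet> (S *v x) = (\<Sum>b\<in>B. (x \<bullet> b) * ((S *v x) \<bullet> b))"
      by (rule orthonormal_basis_inner_expand[OF B])
    also have "\<dots> = (\<Sum>b\<in>B. sqrt (ev b) * (x \<bullet> b)^2)"
      by (rule sum.cong) (simp_all add: Sb power2_eq_square inner_commute[of _ x])
    also have "\<dots> \<ge> 0" by (intro sum_nonneg mult_nonneg_nonneg) (auto simp: ev0)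
    finally show ?thesis .
  qed
  moreover have "sym_mat S" by (simp add: sym_mat_def S_def transpose_def vec_eq_iff mult.commute)
  ultimately have "psd_mat S" by (simp add: psd_mat_def)
  moreover have "S ** S = G"
  proof (subst matrix_eq, intro allI orthonormal_basis_eqI[OF B])
    fix x b assume b: "b \<in> B"
    have "((S ** S) *v x) \<bullet> b = sqrt (ev b) * (b \<bullet> (S *v x))"
      by (simp add: matrix_vector_mul_assoc[symmetric] Sb[OF b])
    also have "\<dots> = ev b * (b \<bullet> x)" using Sb[OF b, of x] ev0[of b]
      by (simp add: inner_commute mult.assoc[symmetric])
    also have "\<dots> = x \<bullet> (G *v b)" by (subst eig[OF b]) (simp add: ev_def inner_commute)
    also have "\<dots> = (G *v x) \<bullet> b" by (rule sym_mat_inner_commute[OF K])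
    finally show "((S ** S) *v x) \<bullet> b = (G *v x) \<bullet> b" .
  qed
  ultimately show thesis by (rule that)
qed

lemma psd_mat_sqrt_unique:
  fixes R S :: "real^'n^'n"
  assumes R: "psd_mat R" and S: "psd_mat S" and eq: "R ** R = S ** S"
  shows "R = S"
proof -
  have KR: "sym_mat R" and KS: "sym_mat S" using R S by (auto simp: psd_mat_def)
  obtain B where B: "orthonormal_basis B" and eig: "\<And>b. b \<in> B \<Longrightarrow> R *v b = (b \<bullet> (R *v b)) *\<^sub>R b"
    using sym_mat_eigenbasis[OF KR] by blast
  have agree: "S *v b = R *v b" if b: "b \<in> B" for b
  proof -
    define r where "r = b \<bullet> (R *v b)"
    have Rb: "R *v b = r *\<^sub>R b" unfolding r_def by (rule eig[OF b])
    have r0: "r \<ge> 0" using R by (simp add: psd_mat_def r_def)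
    have SSb: "S *v (S *v b) = r^2 *\<^sub>R b"
      using Rb eq[THEN arg_cong[where f = "\<lambda>N. N *v b"]]
      by (simp add: matrix_vector_mul_assoc[symmetric] matrix_vector_mult_scaleR power2_eq_square)
    define y where "y = S *v b - r *\<^sub>R b"
    have "S *v y + r *\<^sub>R y = 0"
      using SSb by (simp add: y_def matrix_vector_mult_scaleR matrix_vector_mult_diff_distrib
          algebra_simps power2_eq_square)
    then have "y \<bullet> (S *v y) + r * (y \<bullet> y) = 0"
      by (metis inner_add_right inner_scaleR_right inner_zero_right)
    moreover have "y \<bullet> (S *v y) \<ge> 0" using S by (simp add: psd_mat_def)
    ultimately have "r * (y \<bullet> y) \<le> 0" by linarith
    show ?thesis
    proof (cases "r = 0")
      case True
      have "(S *v b) \<bullet> (S *v b) = b \<bullet> (S *v (S *v b))"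
        using sym_mat_inner_commute[OF KS, of b "S *v b"] by simp
      then have "S *v b = 0" using SSb True by simp
      then show ?thesis using Rb True by simp
    next
      case False
      then have "y \<bullet> y \<le> 0" using r0 \<open>r * (y \<bullet> y) \<le> 0\<close> by (simp add: mult_le_0_iff)
      then have "y = 0" using inner_ge_zero[of y] by simp
      then show ?thesis using Rb by (simp add: y_def)
    qed
  qed
  show ?thesis
  proof (subst matrix_eq, intro allI orthonormal_basis_eqI[OF B])
    fix x b assume b: "b \<in> B"
    show "(R *v x) \<bullet> b = (S *v x) \<bullet> b"
      using sym_mat_inner_commute[OF KR, of b x] sym_mat_inner_commute[OF KS, of b x] agree[OF b]
      by (simp add: inner_commute)
  qed
qed

lemma mat_sqrt:
  fixes G :: "real^'n^'n"
  assumes "psd_mat G"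
  shows "psd_mat (mat_sqrt G)" and "mat_sqrt G ** mat_sqrt G = G"
proof -
  obtain S where S: "psd_mat S" "S ** S = G" using psd_mat_sqrt_exists[OF assms] .
  have "mat_sqrt G = S" unfolding mat_sqrt_def
    by (rule the_equality) (use S psd_mat_sqrt_unique in auto)
  then show "psd_mat (mat_sqrt G)" and "mat_sqrt G ** mat_sqrt G = G" using S by simp_all
qed

lemma transpose_mat_sqrt:
  fixes G :: "real^'n^'n"
  assumes "psd_mat G"
  shows "transpose (mat_sqrt G) = mat_sqrt G"
  using mat_sqrt(1)[OF assms] by (simp add: psd_mat_def sym_mat_def)

lemma quadratic_form_le_lambda_max:
  fixes K :: "real^'n^'n"
  assumes K: "sym_mat K"
  shows "x \<bullet> (K *v x) \<le> lambda_max K * (x \<bullet> x)"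
proof -
  obtain B where B: "orthonormal_basis B" and eig: "\<And>b. b \<in> B \<Longrightarrow> K *v b = (b \<bullet> (K *v b)) *\<^sub>R b"
    using sym_mat_eigenbasis[OF K] by blast
  define ev where "ev b = b \<bullet> (K *v b)" for b
  define E where "E = {c. \<exists>v. v \<noteq> 0 \<and> K *v v = c *\<^sub>R v}"
  have "E \<subseteq> ev ` B"
  proof
    fix c assume "c \<in> E"
    then obtain v where v: "v \<noteq> 0" "K *v v = c *\<^sub>R v" by (auto simp: E_def)
    obtain b where b: "b \<in> B" "v \<bullet> b \<noteq> 0"
      using v(1) orthonormal_basis_eqI[OF B, of v 0] by auto
    have "c * (v \<bullet> b) = v \<bullet> (K *v b)" using v sym_mat_inner_commute[OF K, of v b] by simp
    also have "\<dots> = ev b * (v \<bullet> b)" by (subst eig[OF b(1)]) (simp add: ev_def)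
    finally have "c = ev b" using b(2) by simp
    then show "c \<in> ev ` B" using b by blast
  qed
  then have "finite E" using B finite_subset by (auto simp: orthonormal_basis_def)
  have ev_le: "ev b \<le> lambda_max K" if "b \<in> B" for b
  proof -
    have "b \<noteq> 0" using B that by (auto simp: orthonormal_basis_def)
    then have "ev b \<in> E" unfolding E_def ev_def using eig[OF that] by blast
    then show ?thesis unfolding lambda_max_def E_def[symmetric] using \<open>finite E\<close> by simp
  qed
  have "x \<bullet> (K *v x) = (\<Sum>b\<in>B. (x \<bullet> b) * ((K *v x) \<bullet> b))"
    by (rule orthonormal_basis_inner_expand[OF B])
  also have "\<dots> = (\<Sum>b\<in>B. ev b * (x \<bullet> b)^2)"
  proof (rule sum.cong)
    fix b assume b: "b \<in> B"
    have "(K *v x) \<bullet> b = x \<bullet> (K *v b)" by (rule sym_mat_inner_commute[OF K, symmetric])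
    also have "\<dots> = ev b * (x \<bullet> b)" by (subst eig[OF b]) (simp add: ev_def)
    finally show "(x \<bullet> b) * ((K *v x) \<bullet> b) = ev b * (x \<bullet> b)^2" by (simp add: power2_eq_square)
  qed simp
  also have "\<dots> \<le> (\<Sum>b\<in>B. lambda_max K * (x \<bullet> b)^2)"
    by (intro sum_mono mult_right_mono ev_le) auto
  also have "\<dots> = lambda_max K * (x \<bullet> x)"
    using orthonormal_basis_inner_expand[OF B, of x x] by (simp add: sum_distrib_left power2_eq_square)
  finally show ?thesis .
qed

lemma lambda_max_pos:
  fixes K :: "real^'n^'n"
  assumes "sym_mat K" "0 < x \<bullet> (K *v x)"
  shows "0 < lambda_max K"
proof (rule ccontr)
  assume "\<not> 0 < lambda_max K"
  then have "lambda_max K * (x \<bullet> x) \<le> 0" by (simp add: mult_nonpos_nonneg)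
  then show False using quadratic_form_le_lambda_max[OF assms(1), of x] assms(2) by linarith
qed

section \<open>Orthogonal projectors\<close>

lemma matrix_inv_right:
  fixes N :: "'a::semiring_1^'n^'m"
  assumes "invertible N"
  shows "N ** matrix_inv N = mat 1"
  using someI_ex[OF assms[unfolded invertible_def]] by (simp add: matrix_inv_def)

lemma matrix_inv_left:
  fixes N :: "'a::semiring_1^'n^'m"
  assumes "invertible N"
  shows "matrix_inv N ** N = mat 1"
  using someI_ex[OF assms[unfolded invertible_def]] by (simp add: matrix_inv_def)

lemma transpose_matrix_inv_sym:
  fixes N :: "real^'n^'n"
  assumes inv: "invertible N" and sym: "transpose N = N"
  shows "transpose (matrix_inv N) = matrix_inv N"
proof -
  let ?B = "matrix_inv N"
  have "transpose ?B ** N = transpose (N ** ?B)" using sym by (simp add: matrix_transpose_mul)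
  then have BN: "transpose ?B ** N = mat 1" by (simp add: matrix_inv_right[OF inv])
  have "transpose ?B = transpose ?B ** (N ** ?B)" by (simp add: matrix_inv_right[OF inv])
  also have "\<dots> = ?B" by (simp add: matrix_mul_assoc BN)
  finally show ?thesis .
qed

lemma matrix_diff_rdistrib: "(A - B) ** C = A ** C - B ** (C :: real^'c^'b)"
  for A B :: "real^'b^'a"
  by (simp add: vec_eq_iff matrix_matrix_mult_def sum_subtractf algebra_simps)

lemma matrix_diff_ldistrib: "(A :: real^'b^'a) ** (B - C) = A ** B - A ** C"
  by (simp add: vec_eq_iff matrix_matrix_mult_def sum_subtractf algebra_simps)

lemma transpose_diff: "transpose ((A :: real^'b^'a) - B) = transpose A - transpose B"
  by (simp add: vec_eq_iff transpose_def)

lemma column_matrix_mult: "column j (C ** Q) = C *v column j Q"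
  by (simp add: column_def matrix_matrix_mult_def matrix_vector_mult_def vec_eq_iff)

lemma orth_projector_sym_mat: "orth_projector P \<Longrightarrow> sym_mat P"
  by (simp add: orth_projector_def sym_mat_def)

lemma orth_projector_mat_1_diff:
  fixes P :: "real^'n^'n"
  assumes "orth_projector P"
  shows "orth_projector (mat 1 - P)"
  using assms by (simp add: orth_projector_def matrix_diff_rdistrib matrix_diff_ldistrib transpose_diff)

lemma orth_projector_quadratic_form:
  fixes P :: "real^'n^'n"
  assumes "orth_projector P"
  shows "v \<bullet> (P *v v) = (P *v v) \<bullet> (P *v v)"
  using sym_mat_inner_commute[OF orth_projector_sym_mat[OF assms], of v "P *v v"] assms
  by (simp add: matrix_vector_mul_assoc orth_projector_def)

lemma orth_projector_norm_le:
  fixes P :: "real^'n^'n"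
  assumes "orth_projector P"
  shows "norm (P *v x) \<le> norm x"
proof -
  define y where "y = x - P *v x"
  have "(P *v x) \<bullet> y = 0"
    using orth_projector_quadratic_form[OF assms, of x] by (simp add: y_def inner_diff_right inner_commute)
  then have "x \<bullet> x = (P *v x) \<bullet> (P *v x) + y \<bullet> y"
    unfolding y_def by (simp add: inner_diff_left inner_diff_right inner_commute)
  then have "(P *v x) \<bullet> (P *v x) \<le> x \<bullet> x" using inner_ge_zero[of y] by linarith
  then show ?thesis by (simp add: norm_eq_sqrt_inner)
qed

lemma orth_projector_entry_abs_le_1:
  fixes P :: "real^'n^'n"
  assumes "orth_projector P"
  shows "\<bar>P $ i $ j\<bar> \<le> 1"
proof -
  have "P $ i $ j = (P *v axis j 1) $ i" by (simp add: matrix_vector_mult_basis column_def)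
  also have "\<bar>\<dots>\<bar> \<le> norm (P *v axis j 1)" by (rule component_le_norm_cart)
  also have "\<dots> \<le> 1" using orth_projector_norm_le[OF assms, of "axis j 1"] by simp
  finally show ?thesis .
qed

lemma orth_projector_quadratic_form_ge:
  fixes P :: "real^'n^'n"
  assumes P: "orth_projector P" and Px: "P *v x = x"
  shows "(v \<bullet> x)^2 / (x \<bullet> x) \<le> v \<bullet> (P *v v)"
proof (cases "x = 0")
  case False
  have "v \<bullet> x = (P *v v) \<bullet> x"
    using sym_mat_inner_commute[OF orth_projector_sym_mat[OF P], of v x] Px by simp
  then have "(v \<bullet> x)^2 \<le> ((P *v v) \<bullet> (P *v v)) * (x \<bullet> x)" by (simp add: Cauchy_Schwarz_ineq)
  then show ?thesis using False by (simp add: divide_le_eq orth_projector_quadratic_form[OF P])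
qed (simp add: orth_projector_quadratic_form[OF P])

definition colspace_projector :: "real^'l^'n \<Rightarrow> real^'n^'n" where
  "colspace_projector X = X ** matrix_inv (transpose X ** X) ** transpose X"

lemma
  fixes X :: "real^'l^'n"
  assumes inv: "invertible (transpose X ** X)"
  shows orth_projector_colspace_projector: "orth_projector (colspace_projector X)"
    and colspace_projector_mult_self: "colspace_projector X ** X = X"
proof -
  let ?B = "matrix_inv (transpose X ** X)"
  have "transpose ?B = ?B" by (rule transpose_matrix_inv_sym[OF inv]) (simp add: matrix_transpose_mul)
  then have "transpose (colspace_projector X) = colspace_projector X"
    by (simp add: colspace_projector_def matrix_transpose_mul matrix_mul_assoc)
  moreover have "colspace_projector X ** colspace_projector X = X ** (?B ** (transpose X ** X)) ** ?B ** transpose X"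
    by (simp add: colspace_projector_def matrix_mul_assoc)
  ultimately show "orth_projector (colspace_projector X)"
    by (simp add: orth_projector_def matrix_inv_left[OF inv] colspace_projector_def)
  have "colspace_projector X ** X = X ** (?B ** (transpose X ** X))"
    by (simp add: colspace_projector_def matrix_mul_assoc)
  then show "colspace_projector X ** X = X" by (simp add: matrix_inv_left[OF inv])
qed

section \<open>Measurability of matrix-valued maps\<close>

lemma borel_measurable_vec_iff:
  fixes f :: "'s \<Rightarrow> 'a::euclidean_space^'n"
  shows "f \<in> borel_measurable M \<longleftrightarrow> (\<forall>i. (\<lambda>x. f x $ i) \<in> borel_measurable M)"
proof
  assume f: "f \<in> borel_measurable M"
  have "(\<lambda>x::'a^'n. x $ i) \<in> borel_measurable borel" for i
    by (intro borel_measurable_continuous_onI continuous_intros)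
  then show "\<forall>i. (\<lambda>x. f x $ i) \<in> borel_measurable M" using measurable_compose[OF f] by blast
next
  assume f: "\<forall>i. (\<lambda>x. f x $ i) \<in> borel_measurable M"
  show "f \<in> borel_measurable M"
  proof (subst borel_measurable_euclidean_space, intro ballI)
    fix b :: "'a^'n" assume "b \<in> Basis"
    then obtain i c where b: "b = axis i c" "c \<in> Basis" unfolding Basis_vec_def by blast
    have "(\<lambda>x. f x $ i \<bullet> c) \<in> borel_measurable M" using f by (intro borel_measurable_inner) auto
    then show "(\<lambda>x. f x \<bullet> b) \<in> borel_measurable M" by (simp add: b inner_axis)
  qed
qed

lemma borel_measurable_matrix_iff:
  fixes F :: "'s \<Rightarrow> real^'b^'a"
  shows "F \<in> borel_measurable M \<longleftrightarrow> (\<forall>i j. (\<lambda>x. F x $ i $ j) \<in> borel_measurable M)"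
  by (simp add: borel_measurable_vec_iff[of F] borel_measurable_vec_iff[of "\<lambda>x. F x $ _"])

lemma borel_measurable_matrix_entry [measurable (raw)]:
  fixes F :: "'s \<Rightarrow> real^'b^'a"
  shows "F \<in> borel_measurable M \<Longrightarrow> (\<lambda>x. F x $ i $ j) \<in> borel_measurable M"
  by (simp add: borel_measurable_matrix_iff)

lemma borel_measurable_matrix_mult [measurable (raw)]:
  fixes F :: "'s \<Rightarrow> real^'b^'a" and H :: "'s \<Rightarrow> real^'c^'b"
  assumes "F \<in> borel_measurable M" "H \<in> borel_measurable M"
  shows "(\<lambda>x. F x ** H x) \<in> borel_measurable M"
  using assms unfolding borel_measurable_matrix_iff matrix_matrix_mult_def
  by (auto intro!: borel_measurable_sum borel_measurable_times)

lemma borel_measurable_transpose [measurable (raw)]: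
  fixes F :: "'s \<Rightarrow> real^'b^'a"
  shows "F \<in> borel_measurable M \<Longrightarrow> (\<lambda>x. transpose (F x)) \<in> borel_measurable M"
  unfolding borel_measurable_matrix_iff transpose_def by simp

lemma borel_measurable_det [measurable (raw)]:
  fixes F :: "'s \<Rightarrow> real^'n^'n"
  shows "F \<in> borel_measurable M \<Longrightarrow> (\<lambda>x. det (F x)) \<in> borel_measurable M"
  unfolding borel_measurable_matrix_iff det_def
  by (auto intro!: borel_measurable_sum borel_measurable_times borel_measurable_prod)

text \<open>Cramer's rule; on singular matrices \<open>matrix_inv\<close> is an unspecified constant.\<close>
lemma matrix_inv_entry:
  fixes N :: "real^'n^'n"
  shows "matrix_inv N $ i $ j = (if det N \<noteq> 0
     then det (\<chi> a b. if b = i then axis j 1 $ a else N $ a $ b) / det N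
     else matrix_inv (mat 0 :: real^'n^'n) $ i $ j)"
proof (cases "det N = 0")
  case True
  then have "\<not> invertible N" "\<not> invertible (mat 0 :: real^'n^'n)"
    by (metis det_0 invertible_det_nz)+
  then have "(\<lambda>A'. N ** A' = mat 1 \<and> A' ** N = mat 1)
      = (\<lambda>A'. (mat 0 :: real^'n^'n) ** A' = mat 1 \<and> A' ** mat 0 = mat 1)"
    unfolding invertible_def by (auto simp: fun_eq_iff)
  then have "matrix_inv N = matrix_inv (mat 0 :: real^'n^'n)" unfolding matrix_inv_def by simp
  then show ?thesis using True by simp
next
  case False
  then have inv: "invertible N" by (simp add: invertible_det_nz)
  have "N *v (matrix_inv N *v axis j 1) = axis j 1"
    by (simp add: matrix_vector_mul_assoc matrix_inv_right[OF inv])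
  then have "matrix_inv N *v axis j 1 = (\<chi> k. det (\<chi> a b. if b = k then axis j 1 $ a else N $ a $ b) / det N)"
    using cramer[OF False] by blast
  then show ?thesis using False by (simp add: matrix_vector_mult_basis column_def vec_eq_iff)
qed

lemma borel_measurable_matrix_inv [measurable (raw)]:
  fixes F :: "'s \<Rightarrow> real^'n^'n"
  assumes F: "F \<in> borel_measurable M"
  shows "(\<lambda>x. matrix_inv (F x)) \<in> borel_measurable M"
proof -
  have "(\<lambda>x. (\<chi> a b. if b = i then axis j 1 $ a else F x $ a $ b) :: real^'n^'n) \<in> borel_measurable M" for i j
    unfolding borel_measurable_matrix_iff
  proof (intro allI)
    fix a b
    show "(\<lambda>x. (\<chi> a b. if b = i then axis j 1 $ a else F x $ a $ b) $ a $ b) \<in> borel_measurable M"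
      using F by (cases "b = i") (simp_all add: borel_measurable_matrix_iff)
  qed
  then have "(\<lambda>x. det (\<chi> a b. if b = i then axis j 1 $ a else F x $ a $ b)) \<in> borel_measurable M" for i j
    by (rule borel_measurable_det)
  moreover have "(\<lambda>x. det (F x)) \<in> borel_measurable M" using F by (rule borel_measurable_det)
  moreover from this have "{x \<in> space M. det (F x) \<noteq> 0} \<in> sets M" by measurable
  ultimately show ?thesis
    unfolding borel_measurable_matrix_iff[of "\<lambda>x. matrix_inv (F x)"] matrix_inv_entry[of "F _"]
    by (auto intro!: measurable_If borel_measurable_divide)
qed

section \<open>Gaussian matrices have full column rank almost surely\<close>

lemma (in prob_space) indep_var_emeasure_pair_eq_0:
  assumes ind: "indep_var N1 X N2 Y" and S: "S \<in> sets (N1 \<Otimes>\<^sub>M N2)"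
    and slice: "\<And>y. y \<in> space N2 \<Longrightarrow> emeasure (distr M N1 X) ((\<lambda>x. (x, y)) -` S) = 0"
  shows "emeasure M {\<omega>\<in>space M. (X \<omega>, Y \<omega>) \<in> S} = 0"
proof -
  have rv: "random_variable N1 X" "random_variable N2 Y"
    and eq: "distr M N1 X \<Otimes>\<^sub>M distr M N2 Y = distr M (N1 \<Otimes>\<^sub>M N2) (\<lambda>x. (X x, Y x))"
    using ind unfolding indep_var_distribution_eq by auto
  interpret X: prob_space "distr M N1 X" by (rule prob_space_distr) fact
  interpret Y: prob_space "distr M N2 Y" by (rule prob_space_distr) fact
  interpret XY: pair_prob_space "distr M N1 X" "distr M N2 Y" ..
  have XY: "(\<lambda>x. (X x, Y x)) \<in> measurable M (N1 \<Otimes>\<^sub>M N2)" using rv by (rule measurable_Pair)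
  have "{\<omega>\<in>space M. (X \<omega>, Y \<omega>) \<in> S} = (\<lambda>x. (X x, Y x)) -` S \<inter> space M" by auto
  then have "emeasure M {\<omega>\<in>space M. (X \<omega>, Y \<omega>) \<in> S}
      = emeasure (distr M N1 X \<Otimes>\<^sub>M distr M N2 Y) S"
    using emeasure_distr[OF XY S] eq by simp
  also have "\<dots> = (\<integral>\<^sup>+y. emeasure (distr M N1 X) ((\<lambda>x. (x, y)) -` S) \<partial>distr M N2 Y)"
  proof (rule XY.emeasure_pair_measure_alt2)
    have "sets (distr M N1 X \<Otimes>\<^sub>M distr M N2 Y) = sets (N1 \<Otimes>\<^sub>M N2)"
      by (rule sets_pair_measure_cong) simp_all
    then show "S \<in> sets (distr M N1 X \<Otimes>\<^sub>M distr M N2 Y)" using S by simp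
  qed
  also have "\<dots> = (\<integral>\<^sup>+y. 0 \<partial>distr M N2 Y)"
    by (rule nn_integral_cong) (simp add: slice)
  finally show ?thesis by simp
qed

definition mat_mask :: "('m \<times> 'l) set \<Rightarrow> real^'l^'m \<Rightarrow> real^'l^'m" where
  "mat_mask K X = (\<chi> i j. if (i, j) \<in> K then X $ i $ j else 0)"

lemma mat_mask_add_compl: "mat_mask K X + mat_mask (- K) X = X"
  by (simp add: mat_mask_def vec_eq_iff)

lemma measurable_mat_mask:
  "(\<lambda>f. (\<chi> i j. if (i, j) \<in> K then f (i, j) else 0) :: real^'l^'m) \<in> measurable (PiM K (\<lambda>_. borel)) borel"
  unfolding borel_measurable_matrix_iff
proof (intro allI)
  fix i j
  show "(\<lambda>x. ((\<chi> i j. if (i, j) \<in> K then x (i, j) else 0) :: real^'l^'m) $ i $ j)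
      \<in> borel_measurable (PiM K (\<lambda>_. borel))"
    by (cases "(i, j) \<in> K") (auto intro!: measurable_component_singleton)
qed

lemma borel_measurable_inner_column [measurable]:
  "(\<lambda>X :: real^'l^'m. a \<bullet> column k X) \<in> borel_measurable borel"
  unfolding inner_vec_def column_def
  by (intro borel_measurable_sum borel_measurable_times measurable_const borel_measurable_matrix_entry) simp

locale std_gaussian_matrix = prob_space M for M :: "'s measure" +
  fixes Om :: "'s \<Rightarrow> real^'l^'m"
  assumes indep_entries: "indep_vars (\<lambda>_. borel) (\<lambda>(i, j) \<omega>. Om \<omega> $ i $ j) UNIV"
    and std_normal_entries: "\<And>i j. distributed M lborel (\<lambda>\<omega>. Om \<omega> $ i $ j) std_normal_density"
begin

lemma borel_measurable_entry [measurable]: "(\<lambda>\<omega>. Om \<omega> $ i $ j) \<in> borel_measurable M"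
  using distributed_measurable[OF std_normal_entries[of i j]] by simp

lemma borel_measurable_Om [measurable]: "Om \<in> borel_measurable M"
  by (simp add: borel_measurable_matrix_iff)

lemma emeasure_entry_eq: "emeasure M {\<omega>\<in>space M. Om \<omega> $ i $ j = t} = 0"
proof -
  have "{\<omega>\<in>space M. Om \<omega> $ i $ j = t} = (\<lambda>\<omega>. Om \<omega> $ i $ j) -` {t} \<inter> space M" by auto
  then have "emeasure M {\<omega>\<in>space M. Om \<omega> $ i $ j = t} = set_nn_integral lborel {t} std_normal_density"
    using distributed_emeasure[OF std_normal_entries[of i j], of "{t}"] by simp
  also have "\<dots> = 0"
  proof -
    have "AE x in lborel. ennreal (std_normal_density x) * indicator {t} x = 0"
      using AE_lborel_singleton[of t] by (auto elim!: eventually_mono)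
    then show ?thesis by (subst nn_integral_cong_AE) auto
  qed
  finally show ?thesis .
qed

lemma borel_measurable_mat_mask [measurable]: "(\<lambda>\<omega>. mat_mask K (Om \<omega>)) \<in> borel_measurable M"
  unfolding borel_measurable_matrix_iff mat_mask_def
proof (intro allI)
  fix i j
  show "(\<lambda>x. (\<chi> i j. if (i, j) \<in> K then Om x $ i $ j else 0) $ i $ j) \<in> borel_measurable M"
    by (cases "(i, j) \<in> K") simp_all
qed

lemma indep_var_mat_mask:
  assumes "K \<inter> L = {}"
  shows "indep_var borel (\<lambda>\<omega>. mat_mask K (Om \<omega>)) borel (\<lambda>\<omega>. mat_mask L (Om \<omega>))"
proof -
  let ?E = "\<lambda>K \<omega>. restrict (\<lambda>p. (\<lambda>(i, j) \<omega>. Om \<omega> $ i $ j) p \<omega>) K"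
  let ?mask = "\<lambda>K f. (\<chi> i j. if (i, j) \<in> K then f (i, j) else 0) :: real^'l^'m"
  have "indep_var (PiM K (\<lambda>_. borel)) (?E K) (PiM L (\<lambda>_. borel)) (?E L)"
    by (rule indep_var_restrict[OF indep_entries assms]) auto
  then have "indep_var borel (?mask K \<circ> ?E K) borel (?mask L \<circ> ?E L)"
    by (rule indep_var_compose[OF _ measurable_mat_mask measurable_mat_mask])
  moreover have "?mask K' \<circ> ?E K' = (\<lambda>\<omega>. mat_mask K' (Om \<omega>))" for K'
    by (auto simp: fun_eq_iff mat_mask_def vec_eq_iff)
  ultimately show ?thesis by simp
qed

text \<open>Condition on all entries but one entry \<open>(i0, k)\<close> with \<open>a $ i0 \<noteq> 0\<close>.\<close>
lemma emeasure_column_hyperplane: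
  fixes a :: "real^'m"
  assumes "a \<noteq> 0"
  shows "emeasure M {\<omega>\<in>space M. a \<bullet> column k (Om \<omega>) = 0} = 0"
proof -
  obtain i0 where i0: "a $ i0 \<noteq> 0" using assms by (auto simp: vec_eq_iff)
  define K where "K = {(i0, k)}"
  define f where "f p = a \<bullet> column k (fst p + snd p)" for p :: "(real^'l^'m) \<times> (real^'l^'m)"
  have "f \<in> borel_measurable (borel \<Otimes>\<^sub>M borel)" unfolding f_def by measurable
  then have S: "f -` {0} \<inter> space (borel \<Otimes>\<^sub>M borel) \<in> sets (borel \<Otimes>\<^sub>M borel)"
    by (rule borel_measurable_vimage)
  have mask_K: "a \<bullet> column k (mat_mask K Z + y) = a $ i0 * Z $ i0 $ k + a \<bullet> column k y" for Z y
  proof -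
    have "a \<bullet> column k (mat_mask K Z) = a $ i0 * Z $ i0 $ k"
      by (simp add: inner_vec_def column_def mat_mask_def K_def if_distrib cong: if_cong)
    moreover have "column k (mat_mask K Z + y) = column k (mat_mask K Z) + column k y"
      by (simp add: column_def vec_eq_iff)
    ultimately show ?thesis by (simp add: inner_add_right)
  qed
  have "emeasure M {\<omega>\<in>space M. (mat_mask K (Om \<omega>), mat_mask (-K) (Om \<omega>)) \<in> f -` {0} \<inter> space (borel \<Otimes>\<^sub>M borel)} = 0"
  proof (rule indep_var_emeasure_pair_eq_0[OF indep_var_mat_mask S])
    fix y :: "real^'l^'m"
    have sl: "(\<lambda>x. (x, y)) -` (f -` {0} \<inter> space (borel \<Otimes>\<^sub>M borel)) = {x. a \<bullet> column k (x + y) = 0}"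
      by (auto simp: f_def space_pair_measure)
    have iff: "a \<bullet> column k (mat_mask K (Om \<omega>) + y) = 0 \<longleftrightarrow> Om \<omega> $ i0 $ k = - (a \<bullet> column k y) / a $ i0"
      for \<omega> using i0 unfolding mask_K by (auto simp: field_simps)
    have "{x::real^'l^'m. a \<bullet> column k (x + y) = 0} \<in> sets borel" by measurable
    then have "emeasure (distr M borel (\<lambda>\<omega>. mat_mask K (Om \<omega>))) {x. a \<bullet> column k (x + y) = 0}
        = emeasure M {\<omega>\<in>space M. Om \<omega> $ i0 $ k = - (a \<bullet> column k y) / a $ i0}"
      by (subst emeasure_distr) (auto simp: iff intro!: arg_cong[where f = "emeasure M"])
    also have "\<dots> = 0" by (rule emeasure_entry_eq)
    finally show "emeasure (distr M borel (\<lambda>\<omega>. mat_mask K (Om \<omega>)))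
        ((\<lambda>x. (x, y)) -` (f -` {0} \<inter> space (borel \<Otimes>\<^sub>M borel))) = 0" unfolding sl .
  qed auto
  moreover have "{\<omega>\<in>space M. (mat_mask K (Om \<omega>), mat_mask (-K) (Om \<omega>)) \<in> f -` {0} \<inter> space (borel \<Otimes>\<^sub>M borel)}
      = {\<omega>\<in>space M. a \<bullet> column k (Om \<omega>) = 0}"
    by (auto simp: f_def space_pair_measure mat_mask_add_compl)
  ultimately show ?thesis by simp
qed

end

definition lin_indep_cols :: "'l set \<Rightarrow> real^'l^'n \<Rightarrow> bool" where
  "lin_indep_cols J X \<longleftrightarrow> (\<forall>c. (\<Sum>j\<in>J. c j *\<^sub>R column j X) = 0 \<longrightarrow> (\<forall>j\<in>J. c j = 0))"

definition gram_on :: "'l set \<Rightarrow> real^'l^'n \<Rightarrow> real^'l^'l" where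
  "gram_on J X = (\<chi> a b. if a \<in> J \<and> b \<in> J then column a X \<bullet> column b X else (if a = b then 1 else 0))"

definition col_upd :: "'l \<Rightarrow> real^'l^'m \<Rightarrow> real^'l^'m \<Rightarrow> real^'l^'m" where
  "col_upd k Y Z = (\<chi> i j. if j = k then Z $ i $ j else Y $ i $ j)"

lemma det_ne_0_iff_ker_0:
  fixes A :: "real^'n^'n"
  shows "det A \<noteq> 0 \<longleftrightarrow> (\<forall>x. A *v x = 0 \<longrightarrow> x = 0)"
  by (simp add: invertible_det_nz[symmetric] invertible_left_inverse matrix_left_invertible_ker)

lemma gram_on_mult_vec:
  "(gram_on J X *v c) $ a = (if a \<in> J then column a X \<bullet> (\<Sum>b\<in>J. c $ b *\<^sub>R column b X) else c $ a)"
proof (cases "a \<in> J")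
  case True
  have "(gram_on J X *v c) $ a = (\<Sum>b\<in>UNIV. if b \<in> J then (column a X \<bullet> column b X) * c $ b else 0)"
    unfolding matrix_vector_mult_def using True by (auto simp: gram_on_def intro!: sum.cong)
  also have "\<dots> = column a X \<bullet> (\<Sum>b\<in>J. c $ b *\<^sub>R column b X)"
    by (simp add: sum.inter_restrict[symmetric] inner_sum_right mult.commute)
  finally show ?thesis using True by simp
next
  case False
  have "gram_on J X $ a $ b * c $ b = (if a = b then c $ b else 0)" for b
    using False by (simp add: gram_on_def)
  then show ?thesis using False by (simp add: matrix_vector_mult_def)
qed

lemma lin_indep_cols_iff_det_gram_on:
  fixes X :: "real^'l::finite^'n"
  shows "lin_indep_cols J X \<longleftrightarrow> det (gram_on J X) \<noteq> 0"
proof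
  assume indep: "lin_indep_cols J X"
  show "det (gram_on J X) \<noteq> 0"
  proof (subst det_ne_0_iff_ker_0, intro allI impI)
    fix c assume g: "gram_on J X *v c = 0"
    define v where "v = (\<Sum>b\<in>J. c $ b *\<^sub>R column b X)"
    have "column a X \<bullet> v = 0" if "a \<in> J" for a
      using g[THEN arg_cong[where f="\<lambda>x. x $ a"]] that by (simp add: gram_on_mult_vec v_def)
    then have "v \<bullet> v = 0" by (simp add: v_def[of] inner_sum_left)
    with indep have "\<forall>j\<in>J. c $ j = 0" unfolding lin_indep_cols_def v_def by simp
    moreover have "c $ a = 0" if "a \<notin> J" for a
      using g[THEN arg_cong[where f="\<lambda>x. x $ a"]] that by (simp add: gram_on_mult_vec)
    ultimately show "c = 0" by (auto simp: vec_eq_iff)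
  qed
next
  assume d: "det (gram_on J X) \<noteq> 0"
  show "lin_indep_cols J X" unfolding lin_indep_cols_def
  proof (intro allI impI)
    fix c :: "'l \<Rightarrow> real" assume s: "(\<Sum>j\<in>J. c j *\<^sub>R column j X) = 0"
    define cv where "cv = (\<chi> j. if j \<in> J then c j else 0)"
    have v0: "(\<Sum>b\<in>J. cv $ b *\<^sub>R column b X) = 0" using s by (simp add: cv_def)
    have "gram_on J X *v cv = 0"
      unfolding vec_eq_iff by (simp only: gram_on_mult_vec v0 inner_zero_right) (auto simp: cv_def)
    then have "cv = 0" using d det_ne_0_iff_ker_0 by blast
    then show "\<forall>j\<in>J. c j = 0" by (auto simp: cv_def vec_eq_iff split: if_splits)
  qed
qed

lemma lin_indep_cols_cong:
  fixes X X' :: "real^'l::finite^'n"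
  shows "(\<And>j. j \<in> J \<Longrightarrow> column j X = column j X') \<Longrightarrow> lin_indep_cols J X = lin_indep_cols J X'"
  unfolding lin_indep_cols_def by (metis (no_types, lifting) sum.cong)

lemma invertible_gram_if_lin_indep_cols:
  fixes Q :: "real^'l^'n"
  assumes "lin_indep_cols UNIV Q"
  shows "invertible (transpose Q ** Q)"
  using assms unfolding invertible_det_nz lin_indep_cols_iff_det_gram_on gram_on_def
  by (simp add: matrix_mult_transpose_dot_column)

lemma column_col_upd: "column j (col_upd k Y Z) = (if j = k then column k Z else column j Y)"
  by (simp add: column_def col_upd_def vec_eq_iff)

lemma borel_measurable_gram_on [measurable (raw)]:
  fixes F :: "'s \<Rightarrow> real^'l^'n"
  shows "F \<in> borel_measurable N \<Longrightarrow> (\<lambda>x. gram_on J (F x)) \<in> borel_measurable N"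
proof -
  assume F: "F \<in> borel_measurable N"
  show ?thesis unfolding borel_measurable_matrix_iff
  proof (intro allI)
    fix a b
    show "(\<lambda>x. gram_on J (F x) $ a $ b) \<in> borel_measurable N"
      using F by (cases "a \<in> J \<and> b \<in> J")
        (auto simp: gram_on_def inner_vec_def column_def intro!: borel_measurable_sum borel_measurable_times)
  qed
qed

lemma borel_measurable_col_upd [measurable (raw)]:
  fixes Y Z :: "'s \<Rightarrow> real^'l^'m"
  assumes "Y \<in> borel_measurable N" "Z \<in> borel_measurable N"
  shows "(\<lambda>x. col_upd k (Y x) (Z x)) \<in> borel_measurable N"
  unfolding borel_measurable_matrix_iff[of "\<lambda>x. col_upd k (Y x) (Z x)"]
proof (intro allI)
  fix i j
  show "(\<lambda>x. col_upd k (Y x) (Z x) $ i $ j) \<in> borel_measurable N"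
    using assms by (cases "j = k") (simp_all add: col_upd_def borel_measurable_matrix_entry)
qed

text \<open>A dependence puts \<open>C *v column k Z\<close> into the span of the columns \<open>J\<close> of \<open>C ** Y\<close>,
  which is orthogonal to some \<open>b \<noteq> 0\<close>; take \<open>a = transpose C *v b\<close>.\<close>
lemma dependent_col_upd_subset_hyperplane:
  fixes C :: "real^'m^'n" and Y :: "real^'l^'m"
  assumes injC: "inj ((*v) (transpose C))" and k: "k \<notin> J" and card: "card J < CARD('n)"
    and indep: "lin_indep_cols J (C ** Y)"
  obtains a where "a \<noteq> 0" "{Z. \<not> lin_indep_cols (insert k J) (C ** col_upd k Y Z)} \<subseteq> {Z. a \<bullet> column k Z = 0}"
proof -
  define V where "V = (\<lambda>j. column j (C ** Y)) ` J"
  have "finite V" by (simp add: V_def)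
  then have "dim V \<le> card V" using dim_le_card[OF span_superset] by blast
  also have "card V \<le> card J" unfolding V_def by (rule card_image_le) simp
  finally have "dim V \<le> card J" .
  then have "dim V < DIM(real^'n)" using card by simp
  then obtain b where b: "b \<noteq> 0" "\<And>x. x \<in> span V \<Longrightarrow> orthogonal b x"
    by (rule orthogonal_to_subspace_exists) blast
  define a where "a = transpose C *v b"
  have "a \<noteq> 0"
    using injC b(1) unfolding a_def by (metis injD matrix_vector_mult_0_right)
  moreover have "a \<bullet> column k Z = 0" if dep: "\<not> lin_indep_cols (insert k J) (C ** col_upd k Y Z)" for Z
  proof -
    obtain c j1 where c: "(\<Sum>j\<in>insert k J. c j *\<^sub>R column j (C ** col_upd k Y Z)) = 0"
      and j1: "j1 \<in> insert k J" "c j1 \<noteq> 0"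
      using dep unfolding lin_indep_cols_def by blast
    have cols: "column j (C ** col_upd k Y Z) = (if j = k then C *v column k Z else column j (C ** Y))" for j
      by (simp add: column_matrix_mult column_col_upd)
    define W where "W = (\<Sum>j\<in>J. c j *\<^sub>R column j (C ** Y))"
    have "(\<Sum>j\<in>J. c j *\<^sub>R column j (C ** col_upd k Y Z)) = W"
      unfolding W_def using k by (intro sum.cong) (auto simp: cols)
    then have e: "c k *\<^sub>R (C *v column k Z) + W = 0"
      using c k by (simp add: cols)
    have "c k \<noteq> 0"
    proof
      assume "c k = 0"
      then have "W = 0" using e by simp
      with indep have "\<forall>j\<in>J. c j = 0" unfolding lin_indep_cols_def W_def by blast
      with j1 \<open>c k = 0\<close> show False by auto
    qed
    then have "C *v column k Z = - (1 / c k) *\<^sub>R W"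
      using e by (simp add: eq_neg_iff_add_eq_0[symmetric] field_simps)
    moreover have "W \<in> span V" unfolding W_def V_def
      by (intro span_sum span_scale span_base) auto
    ultimately have "C *v column k Z \<in> span V" by (simp add: span_scale span_neg)
    then have "b \<bullet> (C *v column k Z) = 0" using b(2) by (simp add: orthogonal_def)
    then show ?thesis by (simp add: a_def inner_matrix_vector_transpose)
  qed
  ultimately show thesis using that by blast
qed

context std_gaussian_matrix
begin

lemma AE_lin_indep_cols_insert:
  fixes C :: "real^'m^'n"
  assumes injC: "inj ((*v) (transpose C))" and k: "k \<notin> J" and card: "card J < CARD('n)"
    and IH: "AE \<omega> in M. lin_indep_cols J (C ** Om \<omega>)"
  shows "AE \<omega> in M. lin_indep_cols (insert k J) (C ** Om \<omega>)"
proof -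
  define Kc where "Kc = {p :: 'm \<times> 'l. snd p = k}"
  define Z where "Z \<omega> = mat_mask Kc (Om \<omega>)" for \<omega>
  define Y where "Y \<omega> = mat_mask (- Kc) (Om \<omega>)" for \<omega>
  have Zm: "Z \<in> borel_measurable M" unfolding Z_def by measurable
  have column_Z: "column k (Z \<omega>) = column k (Om \<omega>)" for \<omega>
    by (simp add: column_def Z_def mat_mask_def Kc_def vec_eq_iff)
  have Om_eq: "col_upd k (Y \<omega>) (Z \<omega>) = Om \<omega>" for \<omega>
    by (simp add: col_upd_def Y_def Z_def mat_mask_def Kc_def vec_eq_iff)
  have "column j (Y \<omega>) = column j (Om \<omega>)" if "j \<in> J" for j \<omega>
    using that k by (auto simp: column_def Y_def mat_mask_def Kc_def vec_eq_iff)
  then have indep_Y: "lin_indep_cols J (C ** Y \<omega>) = lin_indep_cols J (C ** Om \<omega>)" for \<omega>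
    by (intro lin_indep_cols_cong) (simp add: column_matrix_mult)
  define S where "S = {p \<in> space (borel \<Otimes>\<^sub>M borel). det (gram_on J (C ** snd p)) \<noteq> 0 \<and>
      det (gram_on (insert k J) (C ** col_upd k (snd p) (fst p))) = 0}"
  have S_sets: "S \<in> sets (borel \<Otimes>\<^sub>M (borel :: (real^'l^'m) measure))"
    unfolding S_def by measurable
  have "emeasure M {\<omega>\<in>space M. (Z \<omega>, Y \<omega>) \<in> S} = 0"
  proof (rule indep_var_emeasure_pair_eq_0[OF _ S_sets])
    show "indep_var borel Z borel Y" unfolding Z_def Y_def by (rule indep_var_mat_mask) auto
  next
    fix y :: "real^'l^'m"
    show "emeasure (distr M borel Z) ((\<lambda>x. (x, y)) -` S) = 0"
    proof (cases "lin_indep_cols J (C ** y)")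
      case False
      then have "(\<lambda>x. (x, y)) -` S = {}" by (auto simp: S_def lin_indep_cols_iff_det_gram_on)
      then show ?thesis by simp
    next
      case True
      obtain a where a: "a \<noteq> 0"
        "{z. \<not> lin_indep_cols (insert k J) (C ** col_upd k y z)} \<subseteq> {z. a \<bullet> column k z = 0}"
        using dependent_col_upd_subset_hyperplane[OF injC k card True] .
      have "(\<lambda>x. (x, y)) -` S \<subseteq> {z. a \<bullet> column k z = 0}"
        using a(2) by (auto simp: S_def lin_indep_cols_iff_det_gram_on)
      moreover have "{z::real^'l^'m. a \<bullet> column k z = 0} \<in> sets borel" by measurable
      ultimately have "emeasure (distr M borel Z) ((\<lambda>x. (x, y)) -` S)
          \<le> emeasure (distr M borel Z) {z. a \<bullet> column k z = 0}"
        by (intro emeasure_mono) simp_all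
      also have "\<dots> = emeasure M (Z -` {z. a \<bullet> column k z = 0} \<inter> space M)"
        by (rule emeasure_distr[OF Zm]) fact
      also have "Z -` {z. a \<bullet> column k z = 0} \<inter> space M = {\<omega>\<in>space M. a \<bullet> column k (Om \<omega>) = 0}"
        by (auto simp: column_Z)
      also have "emeasure M \<dots> = 0" by (rule emeasure_column_hyperplane[OF a(1)])
      finally show ?thesis by simp
    qed
  qed
  moreover have "{\<omega>\<in>space M. (Z \<omega>, Y \<omega>) \<in> S} \<in> sets M"
    using S_sets unfolding Z_def Y_def by measurable
  ultimately have "AE \<omega> in M. (Z \<omega>, Y \<omega>) \<notin> S"
    by (intro AE_I'[OF null_setsI]) auto
  with IH show ?thesis
  proof eventually_elim
    case (elim \<omega>)
    then show ?case using indep_Y[of \<omega>] Om_eq[of \<omega>]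
      by (auto simp: S_def lin_indep_cols_iff_det_gram_on space_pair_measure)
  qed
qed

lemma AE_invertible_gram:
  fixes C :: "real^'m^'n"
  assumes injC: "inj ((*v) (transpose C))" and card: "CARD('l) \<le> CARD('n)"
  shows "AE \<omega> in M. invertible (transpose (C ** Om \<omega>) ** (C ** Om \<omega>))"
proof -
  have "finite J \<Longrightarrow> AE \<omega> in M. lin_indep_cols J (C ** Om \<omega>)" for J :: "'l set"
  proof (induction J rule: finite_induct)
    case empty then show ?case by (simp add: lin_indep_cols_def)
  next
    case (insert k J)
    have "J \<subset> UNIV" using insert(2) by auto
    then have "card J < CARD('l)" by (simp add: psubset_card_mono)
    then show ?case using card insert(2,3) by (intro AE_lin_indep_cols_insert[OF injC]) auto
  qed
  then have "AE \<omega> in M. lin_indep_cols UNIV (C ** Om \<omega>)" by simp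
  then show ?thesis by eventually_elim (rule invertible_gram_if_lin_indep_cols)
qed

end

section \<open>Invariance of the Gaussian law under sign changes and row permutations\<close>

definition mat_of_entries :: "('m \<times> 'l \<Rightarrow> real) \<Rightarrow> real^'l^'m" where
  "mat_of_entries f = (\<chi> i j. f (i, j))"

lemma measurable_mat_of_entries:
  "(mat_of_entries :: ('m \<times> 'l \<Rightarrow> real) \<Rightarrow> real^'l^'m) \<in> measurable (PiM UNIV (\<lambda>_. borel)) borel"
  using measurable_mat_mask[where K = UNIV] unfolding mat_of_entries_def[abs_def] by simp

lemma (in prob_space) distr_PiM_iid_std_normal:
  fixes Y :: "'i \<Rightarrow> 'a \<Rightarrow> real"
  assumes indep: "indep_vars (\<lambda>_. borel) Y UNIV"
    and normal: "\<And>p. distributed M lborel (Y p) std_normal_density"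
  shows "distr M (PiM UNIV (\<lambda>_. borel)) (\<lambda>\<omega>. \<lambda>p\<in>UNIV. Y p \<omega>) = PiM UNIV (\<lambda>_. std_normal_distribution)"
proof -
  have "distr M borel (Y p) = std_normal_distribution" for p
  proof -
    have "distr M borel (Y p) = distr M lborel (Y p)" by (rule distr_cong) simp_all
    then show ?thesis using normal[of p] by (simp add: distributed_def)
  qed
  moreover have "random_variable borel (Y p)" for p
    using distributed_measurable[OF normal[of p]] by simp
  ultimately show ?thesis
    using indep_vars_iff_distr_eq_PiM[where I = UNIV and M' = "\<lambda>_. borel" and X = Y] indep by simp
qed

lemma (in prob_space) distr_mat_of_entries:
  fixes Y :: "'m::finite \<times> 'l::finite \<Rightarrow> 'a \<Rightarrow> real"
  assumes Y: "\<And>p. Y p \<in> borel_measurable M"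
    and law: "distr M (PiM UNIV (\<lambda>_. borel)) (\<lambda>\<omega>. \<lambda>p\<in>UNIV. Y p \<omega>) = PiM UNIV (\<lambda>_. std_normal_distribution)"
  shows "distr M borel (\<lambda>\<omega>. mat_of_entries (\<lambda>p. Y p \<omega>))
    = distr (PiM UNIV (\<lambda>_. std_normal_distribution)) borel (mat_of_entries :: _ \<Rightarrow> real^'l^'m)"
proof -
  have "(\<lambda>\<omega>. \<lambda>p\<in>UNIV. Y p \<omega>) \<in> measurable M (PiM UNIV (\<lambda>_. borel))"
    by (rule measurable_restrict) (simp add: Y)
  from distr_distr[OF measurable_mat_of_entries this] show ?thesis
    unfolding law by (simp add: comp_def mat_of_entries_def)
qed

context std_gaussian_matrix
begin

lemma distr_Om: "distr M borel Om = distr (PiM UNIV (\<lambda>_. std_normal_distribution)) borel mat_of_entries"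
proof -
  have "indep_vars (\<lambda>_. borel) (\<lambda>p \<omega>. Om \<omega> $ fst p $ snd p) UNIV"
    using indep_entries by (rule indep_vars_cong[THEN iffD1, rotated -1]) (auto simp: fun_eq_iff split: prod.split)
  then have "distr M (PiM UNIV (\<lambda>_. borel)) (\<lambda>\<omega>. \<lambda>p\<in>UNIV. Om \<omega> $ fst p $ snd p)
      = PiM UNIV (\<lambda>_. std_normal_distribution)"
    by (rule distr_PiM_iid_std_normal) (simp add: std_normal_entries)
  then have "distr M borel (\<lambda>\<omega>. mat_of_entries (\<lambda>p. Om \<omega> $ fst p $ snd p))
      = distr (PiM UNIV (\<lambda>_. std_normal_distribution)) borel mat_of_entries"
    by (intro distr_mat_of_entries) simp_all
  then show ?thesis by (simp add: mat_of_entries_def)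
qed

lemma integral_Om_eq:
  fixes Y :: "'m \<times> 'l \<Rightarrow> 's \<Rightarrow> real" and h :: "real^'l^'m \<Rightarrow> real"
  assumes Y: "\<And>p. Y p \<in> borel_measurable M"
    and law: "distr M borel (\<lambda>\<omega>. mat_of_entries (\<lambda>p. Y p \<omega>)) = distr M borel Om"
    and h: "h \<in> borel_measurable borel"
  shows "integral\<^sup>L M (\<lambda>\<omega>. h (Om \<omega>)) = integral\<^sup>L M (\<lambda>\<omega>. h (mat_of_entries (\<lambda>p. Y p \<omega>)))"
proof -
  have "(\<lambda>\<omega>. \<lambda>p\<in>UNIV. Y p \<omega>) \<in> measurable M (PiM UNIV (\<lambda>_. borel))"
    by (rule measurable_restrict) (simp add: Y)
  from measurable_compose[OF this measurable_mat_of_entries]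
  have "(\<lambda>\<omega>. mat_of_entries (\<lambda>p. Y p \<omega>) :: real^'l^'m) \<in> borel_measurable M"
    by (simp add: mat_of_entries_def)
  then show ?thesis
    using integral_distr[OF borel_measurable_Om h] integral_distr[OF _ h] law by metis
qed

lemma distr_flip_entry:
  fixes p0 :: "'m \<times> 'l"
  shows "distr M borel (\<lambda>\<omega>. mat_of_entries (\<lambda>p. (if p = p0 then -1 else 1) * Om \<omega> $ fst p $ snd p))
    = distr M borel Om"
  unfolding distr_Om
proof (rule distr_mat_of_entries)
  let ?Y = "\<lambda>p \<omega>. (if p = p0 then -1 else 1) * Om \<omega> $ fst p $ snd p"
  have "indep_vars (\<lambda>_. borel)
      (\<lambda>p x. (\<lambda>p t. (if p = p0 then -1 else 1) * t) p ((\<lambda>(i, j) \<omega>. Om \<omega> $ i $ j) p x)) UNIV"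
    by (rule indep_vars_compose2[OF indep_entries]) simp
  then have "indep_vars (\<lambda>_. borel) ?Y UNIV"
    by (rule indep_vars_cong[THEN iffD1, rotated -1]) (auto simp: fun_eq_iff split: prod.split)
  moreover have "distributed M lborel (?Y p) std_normal_density" for p
  proof -
    define \<alpha> :: real where "\<alpha> = (if p = p0 then -1 else 1)"
    have "distributed M lborel (\<lambda>x. 0 + \<alpha> * Om x $ fst p $ snd p)
        (\<lambda>x. ennreal (normal_density (0 + \<alpha> * 0) (\<bar>\<alpha>\<bar> * 1) x))"
      by (rule normal_density_affine[OF std_normal_entries]) (simp_all add: \<alpha>_def)
    moreover have "\<bar>\<alpha>\<bar> = 1" by (simp add: \<alpha>_def)
    ultimately show ?thesis by (simp add: \<alpha>_def)
  qed
  ultimately show "distr M (PiM UNIV (\<lambda>_. borel)) (\<lambda>\<omega>. \<lambda>p\<in>UNIV. ?Y p \<omega>) = PiM UNIV (\<lambda>_. std_normal_distribution)"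
    by (rule distr_PiM_iid_std_normal)
qed simp

lemma distr_permute_entries:
  fixes \<tau> :: "'m \<times> 'l \<Rightarrow> 'm \<times> 'l"
  assumes inj: "inj \<tau>"
  shows "distr M borel (\<lambda>\<omega>. mat_of_entries (\<lambda>p. Om \<omega> $ fst (\<tau> p) $ snd (\<tau> p))) = distr M borel Om"
  unfolding distr_Om
proof (rule distr_mat_of_entries)
  let ?X = "\<lambda>\<omega>. \<lambda>p\<in>UNIV. Om \<omega> $ fst p $ snd p"
  let ?N = "PiM UNIV (\<lambda>_::'m \<times> 'l. std_normal_distribution)"
  have X: "?X \<in> measurable M (PiM UNIV (\<lambda>_. borel))" by (rule measurable_restrict) simp
  have "indep_vars (\<lambda>_. borel) (\<lambda>p \<omega>. Om \<omega> $ fst p $ snd p) UNIV"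
    using indep_entries by (rule indep_vars_cong[THEN iffD1, rotated -1]) (auto simp: fun_eq_iff split: prod.split)
  then have law: "distr M (PiM UNIV (\<lambda>_. borel)) ?X = ?N"
    by (rule distr_PiM_iid_std_normal) (simp add: std_normal_entries)
  have perm: "(\<lambda>f. \<lambda>p\<in>UNIV. f (\<tau> p)) \<in> measurable (PiM UNIV (\<lambda>_. borel)) (PiM UNIV (\<lambda>_. borel :: real measure))"
    by (rule measurable_restrict) (rule measurable_component_singleton, simp)
  have "distr M (PiM UNIV (\<lambda>_. borel)) (\<lambda>\<omega>. \<lambda>p\<in>UNIV. Om \<omega> $ fst (\<tau> p) $ snd (\<tau> p))
      = distr (distr M (PiM UNIV (\<lambda>_. borel)) ?X) (PiM UNIV (\<lambda>_. borel)) (\<lambda>f. \<lambda>p\<in>UNIV. f (\<tau> p))"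
    by (subst distr_distr[OF perm X]) (simp add: comp_def)
  also have "\<dots> = distr ?N (PiM UNIV (\<lambda>i. (\<lambda>_. std_normal_distribution) (\<tau> i))) (\<lambda>f. \<lambda>p\<in>UNIV. f (\<tau> p))"
    unfolding law by (rule distr_cong) (auto intro!: sets_PiM_cong)
  also have "\<dots> = ?N"
    by (rule distr_PiM_reindex) (auto simp: prob_space_normal_density inj)
  finally show "distr M (PiM UNIV (\<lambda>_. borel)) (\<lambda>\<omega>. \<lambda>p\<in>UNIV. Om \<omega> $ fst (\<tau> p) $ snd (\<tau> p)) = ?N" .
qed simp

end

section \<open>Second moments of a normalised Gaussian column\<close>

text \<open>Entry \<open>(a, b)\<close> of the orthogonal projector onto the line spanned by column \<open>j\<close>.\<close>
definition col_proj_entry :: "'l \<Rightarrow> 'm \<Rightarrow> 'm \<Rightarrow> real^'l^'m \<Rightarrow> real" where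
  "col_proj_entry j a b X = X $ a $ j * X $ b $ j / (column j X \<bullet> column j X)"

lemma borel_measurable_col_proj_entry [measurable]: "col_proj_entry j a b \<in> borel_measurable borel"
  unfolding col_proj_entry_def inner_vec_def column_def
  by (intro borel_measurable_divide borel_measurable_sum borel_measurable_times borel_measurable_matrix_entry) simp_all

lemma abs_col_proj_entry_le_1: "\<bar>col_proj_entry j a b X\<bar> \<le> 1"
proof -
  let ?x = "column j X"
  have "\<bar>?x $ a * ?x $ b\<bar> \<le> norm ?x * norm ?x"
    unfolding abs_mult by (intro mult_mono component_le_norm_cart) auto
  then have "\<bar>?x $ a * ?x $ b\<bar> \<le> ?x \<bullet> ?x" by (simp add: power2_norm_eq_inner[symmetric] power2_eq_square)
  then show ?thesis
    by (cases "?x \<bullet> ?x = 0") (simp_all add: col_proj_entry_def column_def abs_divide divide_le_eq)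
qed

lemma sum_col_proj_entry_diag: "(\<Sum>a\<in>UNIV. col_proj_entry j a a X) = (if column j X = 0 then 0 else 1)"
proof -
  have "(\<Sum>a\<in>UNIV. col_proj_entry j a a X) = (\<Sum>a\<in>UNIV. X $ a $ j * X $ a $ j) / (column j X \<bullet> column j X)"
    by (simp add: col_proj_entry_def sum_divide_distrib)
  also have "(\<Sum>a\<in>UNIV. X $ a $ j * X $ a $ j) = column j X \<bullet> column j X"
    by (simp add: inner_vec_def column_def)
  finally show ?thesis by simp
qed

lemma inner_column_sq_div:
  fixes w :: "real^'m"
  shows "(w \<bullet> column j X)^2 / (column j X \<bullet> column j X) = (\<Sum>a\<in>UNIV. \<Sum>b\<in>UNIV. w $ a * w $ b * col_proj_entry j a b X)"
proof -
  have "(w \<bullet> column j X)^2 = (\<Sum>a\<in>UNIV. \<Sum>b\<in>UNIV. w $ a * w $ b * (X $ a $ j * X $ b $ j))"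
    by (simp add: power2_eq_square inner_vec_def column_def sum_product mult_ac)
  then show ?thesis by (simp add: col_proj_entry_def sum_divide_distrib)
qed

context std_gaussian_matrix
begin

lemma integrable_col_proj_entry: "integrable M (\<lambda>\<omega>. col_proj_entry j a b (Om \<omega>))"
  by (rule integrable_const_bound[where B = 1]) (simp_all add: abs_col_proj_entry_le_1)

text \<open>Flipping the sign of entry \<open>(a, j)\<close> preserves the law of \<open>Om\<close> and negates the integrand.\<close>
lemma integral_col_proj_entry_off_diag:
  assumes "a \<noteq> b"
  shows "integral\<^sup>L M (\<lambda>\<omega>. col_proj_entry j a b (Om \<omega>)) = 0"
proof -
  define Y where "Y = (\<lambda>p \<omega>. (if p = (a, j) then -1 else 1) * Om \<omega> $ fst p $ snd p)"
  have "col_proj_entry j a b (mat_of_entries (\<lambda>p. Y p \<omega>)) = - col_proj_entry j a b (Om \<omega>)" for \<omega>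
  proof -
    have "column j (mat_of_entries (\<lambda>p. Y p \<omega>)) \<bullet> column j (mat_of_entries (\<lambda>p. Y p \<omega>))
        = column j (Om \<omega>) \<bullet> column j (Om \<omega>)"
      unfolding inner_vec_def column_def by (rule sum.cong) (auto simp: mat_of_entries_def Y_def)
    then show ?thesis using assms by (simp add: col_proj_entry_def mat_of_entries_def Y_def)
  qed
  moreover have "integral\<^sup>L M (\<lambda>\<omega>. col_proj_entry j a b (Om \<omega>))
      = integral\<^sup>L M (\<lambda>\<omega>. col_proj_entry j a b (mat_of_entries (\<lambda>p. Y p \<omega>)))"
    unfolding Y_def by (rule integral_Om_eq[OF _ distr_flip_entry]) simp_all
  ultimately show ?thesis by simp
qed

text \<open>Swapping rows \<open>a\<close> and \<open>b\<close> preserves the law of \<open>Om\<close>.\<close>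
lemma integral_col_proj_entry_diag_eq:
  "integral\<^sup>L M (\<lambda>\<omega>. col_proj_entry j a a (Om \<omega>)) = integral\<^sup>L M (\<lambda>\<omega>. col_proj_entry j b b (Om \<omega>))"
proof -
  define \<sigma> where "\<sigma> = Transposition.transpose a b"
  define \<tau> where "\<tau> = (\<lambda>p::'m \<times> 'l. (\<sigma> (fst p), snd p))"
  have inj: "inj \<tau>" by (auto simp: inj_def \<tau>_def \<sigma>_def dest: transpose_eq_imp_eq)
  have "col_proj_entry j a a (mat_of_entries (\<lambda>p. Om \<omega> $ fst (\<tau> p) $ snd (\<tau> p))) = col_proj_entry j b b (Om \<omega>)" for \<omega>
  proof -
    have "(\<Sum>i\<in>UNIV. Om \<omega> $ \<sigma> i $ j * Om \<omega> $ \<sigma> i $ j) = (\<Sum>i\<in>UNIV. Om \<omega> $ i $ j * Om \<omega> $ i $ j)"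
      by (rule sum.reindex_bij_betw) (simp add: \<sigma>_def)
    then show ?thesis
      by (simp add: col_proj_entry_def mat_of_entries_def \<tau>_def \<sigma>_def inner_vec_def column_def)
  qed
  moreover have "integral\<^sup>L M (\<lambda>\<omega>. col_proj_entry j a a (Om \<omega>))
      = integral\<^sup>L M (\<lambda>\<omega>. col_proj_entry j a a (mat_of_entries (\<lambda>p. Om \<omega> $ fst (\<tau> p) $ snd (\<tau> p))))"
    by (rule integral_Om_eq[OF _ distr_permute_entries[OF inj]]) simp_all
  ultimately show ?thesis by simp
qed

lemma AE_column_ne_0: "AE \<omega> in M. column j (Om \<omega>) \<noteq> 0"
proof (rule AE_I')
  let ?N = "{\<omega>\<in>space M. Om \<omega> $ undefined $ j = 0}"
  have "?N \<in> sets M" by measurable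
  then show "?N \<in> null_sets M" using emeasure_entry_eq by (intro null_setsI) auto
  show "{\<omega> \<in> space M. \<not> column j (Om \<omega>) \<noteq> 0} \<subseteq> ?N"
    by (auto simp: column_def vec_eq_iff)
qed

text \<open>The \<open>CARD('m)\<close> diagonal entries have equal means and sum to \<open>1\<close> almost surely.\<close>
lemma integral_col_proj_entry_diag: "integral\<^sup>L M (\<lambda>\<omega>. col_proj_entry j a a (Om \<omega>)) = 1 / real CARD('m)"
proof -
  have "real CARD('m) * integral\<^sup>L M (\<lambda>\<omega>. col_proj_entry j a a (Om \<omega>))
      = (\<Sum>b\<in>UNIV. integral\<^sup>L M (\<lambda>\<omega>. col_proj_entry j b b (Om \<omega>)))"
    by (simp add: sum.cong[OF refl integral_col_proj_entry_diag_eq[of j _ a]])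
  also have "\<dots> = integral\<^sup>L M (\<lambda>\<omega>. \<Sum>b\<in>UNIV. col_proj_entry j b b (Om \<omega>))"
    by (simp add: integrable_col_proj_entry)
  also have "\<dots> = integral\<^sup>L M (\<lambda>\<omega>. 1)"
  proof (rule integral_cong_AE)
    show "AE \<omega> in M. (\<Sum>b\<in>UNIV. col_proj_entry j b b (Om \<omega>)) = 1"
      using AE_column_ne_0 by eventually_elim (simp add: sum_col_proj_entry_diag)
  qed measurable
  finally show ?thesis by (simp add: prob_space field_simps)
qed

lemma
  fixes w :: "real^'m"
  shows integrable_inner_column_sq_div:
      "integrable M (\<lambda>\<omega>. (w \<bullet> column j (Om \<omega>))^2 / (column j (Om \<omega>) \<bullet> column j (Om \<omega>)))"
    and integral_inner_column_sq_div:
      "integral\<^sup>L M (\<lambda>\<omega>. (w \<bullet> column j (Om \<omega>))^2 / (column j (Om \<omega>) \<bullet> column j (Om \<omega>))) = (w \<bullet> w) / real CARD('m)"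
proof -
  show "integrable M (\<lambda>\<omega>. (w \<bullet> column j (Om \<omega>))^2 / (column j (Om \<omega>) \<bullet> column j (Om \<omega>)))"
    unfolding inner_column_sq_div by (simp add: integrable_col_proj_entry)
  have "integral\<^sup>L M (\<lambda>\<omega>. (w \<bullet> column j (Om \<omega>))^2 / (column j (Om \<omega>) \<bullet> column j (Om \<omega>)))
      = (\<Sum>a\<in>UNIV. \<Sum>b\<in>UNIV. w $ a * w $ b * integral\<^sup>L M (\<lambda>\<omega>. col_proj_entry j a b (Om \<omega>)))"
    unfolding inner_column_sq_div by (simp add: integrable_col_proj_entry)
  also have "\<dots> = (\<Sum>a\<in>UNIV. w $ a * w $ a / real CARD('m))"
  proof (rule sum.cong)
    fix a :: 'm
    have "(\<Sum>b\<in>UNIV. w $ a * w $ b * integral\<^sup>L M (\<lambda>\<omega>. col_proj_entry j a b (Om \<omega>)))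
        = (\<Sum>b\<in>UNIV. if b = a then w $ a * w $ a / real CARD('m) else 0)"
      by (rule sum.cong) (auto simp: integral_col_proj_entry_off_diag integral_col_proj_entry_diag)
    then show "(\<Sum>b\<in>UNIV. w $ a * w $ b * integral\<^sup>L M (\<lambda>\<omega>. col_proj_entry j a b (Om \<omega>)))
        = w $ a * w $ a / real CARD('m)" by simp
  qed simp
  also have "\<dots> = (w \<bullet> w) / real CARD('m)"
    by (simp add: inner_vec_def sum_divide_distrib)
  finally show "integral\<^sup>L M (\<lambda>\<omega>. (w \<bullet> column j (Om \<omega>))^2 / (column j (Om \<omega>) \<bullet> column j (Om \<omega>)))
      = (w \<bullet> w) / real CARD('m)" .
qed

end

section \<open>The sketched projector\<close>

lemma gram_eq_sqrt_factor:
  fixes A :: "real^'n^'m" and S G :: "real^'n^'n" and Q :: "real^'l^'m"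
  assumes "transpose S = S" and "S ** S = G"
  shows "transpose Q ** A ** G ** transpose A ** Q = transpose (S ** transpose A ** Q) ** (S ** transpose A ** Q)"
  by (simp add: matrix_transpose_mul assms(1) assms(2)[symmetric] matrix_mul_assoc)

lemma gram_sketch:
  fixes A :: "real^'n^'m" and G :: "real^'n^'n" and Q :: "real^'l^'m"
  assumes "psd_mat G"
  shows "transpose Q ** A ** G ** transpose A ** Q
    = transpose (mat_sqrt G ** transpose A ** Q) ** (mat_sqrt G ** transpose A ** Q)"
  using assms by (intro gram_eq_sqrt_factor transpose_mat_sqrt mat_sqrt(2))

lemma T_hat_eq_colspace_projector:
  fixes A :: "real^'n^'m" and G :: "real^'n^'n" and Q :: "real^'l^'m"
  assumes "psd_mat G"
  shows "T_hat A G Q = mat 1 - colspace_projector (mat_sqrt G ** transpose A ** Q)"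
proof -
  have "transpose (mat_sqrt G ** transpose A ** Q) = transpose Q ** A ** mat_sqrt G"
    by (simp add: matrix_transpose_mul transpose_mat_sqrt[OF assms] matrix_mul_assoc)
  then show ?thesis
    unfolding T_hat_def colspace_projector_def gram_sketch[OF assms] by (simp add: matrix_mul_assoc)
qed

lemma orth_projector_T_hat:
  fixes A :: "real^'n^'m" and G :: "real^'n^'n" and Q :: "real^'l^'m"
  assumes "psd_mat G" and "invertible (transpose Q ** A ** G ** transpose A ** Q)"
  shows "orth_projector (T_hat A G Q)"
  using assms unfolding T_hat_eq_colspace_projector[OF assms(1)] gram_sketch[OF assms(1)]
  by (intro orth_projector_mat_1_diff orth_projector_colspace_projector)

lemma quadratic_form_sqrt_gram:
  fixes A :: "real^'n^'m" and G :: "real^'n^'n"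
  assumes "psd_mat G"
  shows "v \<bullet> ((mat_sqrt G ** transpose A ** A ** mat_sqrt G) *v v)
    = (A *v (mat_sqrt G *v v)) \<bullet> (A *v (mat_sqrt G *v v))"
proof -
  let ?S = "mat_sqrt G"
  have "(?S ** transpose A ** A ** ?S) *v v = ?S *v (transpose A *v (A *v (?S *v v)))"
    by (simp add: matrix_vector_mul_assoc matrix_mul_assoc)
  then have "v \<bullet> ((?S ** transpose A ** A ** ?S) *v v) = (?S *v v) \<bullet> (transpose A *v (A *v (?S *v v)))"
    using sym_mat_inner_commute[of ?S v] mat_sqrt(1)[OF assms] by (simp add: psd_mat_def)
  then show ?thesis by (simp add: inner_vector_matrix_mult)
qed

lemma divide_square_antimono:
  fixes u d D :: real
  assumes "d \<le> D" "0 \<le> d" "d = 0 \<Longrightarrow> u = 0"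
  shows "u^2 / D \<le> u^2 / d"
  using assms by (cases "d = 0") (auto intro!: divide_left_mono)

text \<open>The projector onto the column space of \<open>G\<^sup>1\<^sup>/\<^sup>2 A\<^sup>T Q\<close> dominates the projector onto
  its \<open>j\<close>-th column, and that column has squared norm at most
  \<open>\<lambda>\<^sub>m\<^sub>a\<^sub>x(A G A\<^sup>T)\<close> times that of the \<open>j\<close>-th column of \<open>Q\<close>.\<close>
lemma quadratic_form_T_hat_le:
  fixes A :: "real^'n^'m" and G :: "real^'n^'n" and Q :: "real^'l^'m" and v :: "real^'n" and j :: 'l
  assumes G: "psd_mat G" and inv: "invertible (transpose Q ** A ** G ** transpose A ** Q)"
  defines "w \<equiv> A *v (mat_sqrt G *v v)" and "g \<equiv> column j Q"
  shows "v \<bullet> (T_hat A G Q *v v)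
    \<le> v \<bullet> v - (w \<bullet> g)^2 / (lambda_max (A ** G ** transpose A) * (g \<bullet> g))"
proof -
  let ?S = "mat_sqrt G" and ?K = "A ** G ** transpose A"
  define X where "X = ?S ** transpose A ** Q"
  define P where "P = colspace_projector X"
  define x where "x = column j X"
  have P: "orth_projector P" and "P ** X = X"
    using inv unfolding P_def X_def gram_sketch[OF G]
    by (simp_all add: orth_projector_colspace_projector colspace_projector_mult_self)
  then have "P *v x = x" by (simp add: x_def column_matrix_mult[symmetric])
  then have Pv: "(v \<bullet> x)^2 / (x \<bullet> x) \<le> v \<bullet> (P *v v)" by (rule orth_projector_quadratic_form_ge[OF P])
  define u where "u = transpose A *v g"
  have x: "x = ?S *v u"
    by (simp add: x_def X_def g_def u_def column_matrix_mult matrix_vector_mul_assoc[symmetric])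
  have sym_S: "sym_mat ?S" using mat_sqrt(1)[OF G] by (simp add: psd_mat_def)
  have vx: "v \<bullet> x = w \<bullet> g"
    using sym_mat_inner_commute[OF sym_S, of v] by (simp add: x w_def u_def inner_vector_matrix_mult)
  have "x \<bullet> x = u \<bullet> (?S *v (?S *v u))"
    unfolding x by (rule sym_mat_inner_commute[OF sym_S, symmetric])
  also have "\<dots> = g \<bullet> (A *v (G *v (transpose A *v g)))"
    unfolding u_def
    by (simp add: matrix_vector_mul_assoc vector_matrix_mul_assoc mat_sqrt(2)[OF G] inner_matrix_vector_transpose)
  also have "\<dots> = g \<bullet> (?K *v g)" by (simp add: matrix_vector_mul_assoc[symmetric])
  also have "\<dots> \<le> lambda_max ?K * (g \<bullet> g)"
    using G by (intro quadratic_form_le_lambda_max)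
      (simp add: sym_mat_def psd_mat_def matrix_transpose_mul matrix_mul_assoc)
  finally have "(w \<bullet> g)^2 / (lambda_max ?K * (g \<bullet> g)) \<le> (v \<bullet> x)^2 / (x \<bullet> x)"
    unfolding vx by (rule divide_square_antimono) (use vx in auto)
  moreover have "v \<bullet> (T_hat A G Q *v v) = v \<bullet> v - v \<bullet> (P *v v)"
    by (simp add: T_hat_eq_colspace_projector[OF G] P_def X_def matrix_vector_mult_diff_rdistrib inner_diff_right)
  ultimately show ?thesis using Pv by linarith
qed

lemma pd_mat_sqrt_gram:
  fixes A :: "real^'n^'m" and G :: "real^'n^'n"
  assumes G: "pd_mat G" and A: "inj ((*v) A)"
  shows "pd_mat (mat_sqrt G ** transpose A ** A ** mat_sqrt G)"
  unfolding pd_mat_def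
proof (intro conjI allI impI)
  have "transpose (mat_sqrt G) = mat_sqrt G" using G by (simp add: transpose_mat_sqrt pd_mat_imp_psd_mat)
  then show "sym_mat (mat_sqrt G ** transpose A ** A ** mat_sqrt G)"
    by (simp add: sym_mat_def matrix_transpose_mul matrix_mul_assoc)
  fix v :: "real^'n" assume "v \<noteq> 0"
  then have "0 < v \<bullet> (G *v v)" using G by (simp add: pd_mat_def)
  then have "mat_sqrt G *v v \<noteq> 0"
    using mat_sqrt(2)[OF pd_mat_imp_psd_mat[OF G]] by (metis inner_zero_right matrix_vector_mul_assoc
        matrix_vector_mult_0_right less_irrefl)
  then have "A *v (mat_sqrt G *v v) \<noteq> 0" using A by (metis injD matrix_vector_mult_0_right)
  then show "0 < v \<bullet> ((mat_sqrt G ** transpose A ** A ** mat_sqrt G) *v v)"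
    by (simp add: quadratic_form_sqrt_gram[OF pd_mat_imp_psd_mat[OF G]])
qed

lemma inj_transpose_mat_sqrt_mult:
  fixes A :: "real^'n^'m" and G :: "real^'n^'n"
  assumes G: "pd_mat G" and A: "inj ((*v) A)"
  shows "inj ((*v) (transpose (mat_sqrt G ** transpose A)))"
proof (rule linear_injective_0[OF matrix_vector_mul_linear, THEN iffD2], intro allI impI)
  fix v assume "transpose (mat_sqrt G ** transpose A) *v v = 0"
  then have "A *v (mat_sqrt G *v v) = 0"
    using transpose_mat_sqrt[OF pd_mat_imp_psd_mat[OF G]]
    by (simp add: matrix_transpose_mul matrix_vector_mul_assoc)
  then show "v = 0"
    using pd_mat_sqrt_gram[OF G A] quadratic_form_sqrt_gram[OF pd_mat_imp_psd_mat[OF G], of v A]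
    by (auto simp: pd_mat_def)
qed

lemma loewner_less_mat_1_diff:
  fixes H :: "real^'n^'n"
  assumes "pd_mat H" and "0 < c"
  shows "loewner_less (mat 1 - c *\<^sub>R H) (mat 1)"
  using assms by (auto simp: loewner_less_def pd_mat_def sym_mat_def transpose_scalar
      scaleR_matrix_vector_assoc[symmetric])

lemma lambda_max_sketch_pos:
  fixes A :: "real^'n^'m" and G :: "real^'n^'n"
  assumes G: "pd_mat G" and A: "inj ((*v) A)"
  shows "0 < lambda_max (A ** G ** transpose A)"
proof -
  obtain y where "y \<noteq> 0" and "y \<in> range ((*v) A)"
    using A by (metis axis_eq_0_iff injD matrix_vector_mult_0_right one_neq_zero rangeI)
  then have "transpose A *v y \<noteq> 0"
    by (metis image_iff inner_eq_zero_iff inner_matrix_vector_transpose inner_zero_left)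
  then have "0 < y \<bullet> ((A ** G ** transpose A) *v y)"
    using G by (simp add: pd_mat_def inner_matrix_vector_transpose matrix_vector_mul_assoc[symmetric])
  moreover have "sym_mat (A ** G ** transpose A)"
    using G by (simp add: pd_mat_def sym_mat_def matrix_transpose_mul matrix_mul_assoc)
  ultimately show ?thesis by (intro lambda_max_pos)
qed

section \<open>Expectations of random matrices\<close>

lemma quadratic_form_expand: "v \<bullet> (F *v v) = (\<Sum>i\<in>UNIV. \<Sum>j\<in>UNIV. v $ i * v $ j * F $ i $ j)"
  by (simp add: inner_vec_def matrix_vector_mult_def sum_distrib_left mult_ac)

lemma
  fixes F :: "'s \<Rightarrow> real^'n^'n"
  assumes "\<And>i j. integrable M (\<lambda>\<omega>. F \<omega> $ i $ j)"
  shows integrable_quadratic_form: "integrable M (\<lambda>\<omega>. v \<bullet> (F \<omega> *v v))"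
    and quadratic_form_mat_expectation:
      "v \<bullet> (mat_expectation M F *v v) = integral\<^sup>L M (\<lambda>\<omega>. v \<bullet> (F \<omega> *v v))"
  using assms by (simp_all add: quadratic_form_expand mat_expectation_def)

lemma sym_mat_entry_commute:
  fixes K :: "real^'n^'n"
  assumes "sym_mat K"
  shows "K $ j $ i = K $ i $ j"
proof -
  have "K $ j $ i = transpose K $ i $ j" by (simp add: transpose_def)
  then show ?thesis using assms by (simp add: sym_mat_def)
qed

lemma sym_mat_expectation:
  fixes F :: "'s \<Rightarrow> real^'n^'n"
  assumes "F \<in> borel_measurable M" and "AE \<omega> in M. sym_mat (F \<omega>)"
  shows "sym_mat (mat_expectation M F)"
proof -
  have "integral\<^sup>L M (\<lambda>\<omega>. F \<omega> $ j $ i) = integral\<^sup>L M (\<lambda>\<omega>. F \<omega> $ i $ j)" for i j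
  proof (rule integral_cong_AE)
    show "AE \<omega> in M. F \<omega> $ j $ i = F \<omega> $ i $ j"
      using assms(2) by eventually_elim (rule sym_mat_entry_commute)
  qed (use assms(1) in measurable)
  then show ?thesis by (simp add: sym_mat_def mat_expectation_def transpose_def vec_eq_iff)
qed

lemma (in prob_space) integrable_entry_if_AE_orth_projector:
  fixes F :: "'a \<Rightarrow> real^'n^'n"
  assumes "F \<in> borel_measurable M" and "AE \<omega> in M. orth_projector (F \<omega>)"
  shows "integrable M (\<lambda>\<omega>. F \<omega> $ i $ j)"
proof (rule integrable_const_bound[where B = 1])
  show "AE \<omega> in M. norm (F \<omega> $ i $ j) \<le> 1"
    using assms(2) by eventually_elim (simp add: orth_projector_entry_abs_le_1)
qed (use assms(1) in measurable)

context std_gaussian_matrix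
begin

text \<open>A single, arbitrary column \<open>g\<close> of \<open>Om\<close> suffices: combine the pointwise bound
  above with \<open>E[(w\<^sup>T g)\<^sup>2 / |g|\<^sup>2] = |w|\<^sup>2 / CARD('m)\<close>.\<close>
lemma loewner_le_expectation_T_hat:
  fixes A :: "real^'n^'m" and G :: "real^'n^'n"
  assumes G: "psd_mat G"
    and inv: "AE \<omega> in M. invertible (transpose (Om \<omega>) ** A ** G ** transpose A ** Om \<omega>)"
    and int: "\<And>i j. integrable M (\<lambda>\<omega>. T_hat A G (Om \<omega>) $ i $ j)"
    and meas: "(\<lambda>\<omega>. T_hat A G (Om \<omega>)) \<in> borel_measurable M"
  shows "loewner_le (mat_expectation M (\<lambda>\<omega>. T_hat A G (Om \<omega>)))
    (mat 1 - (1 / (real CARD('m) * lambda_max (A ** G ** transpose A)))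
      *\<^sub>R (mat_sqrt G ** transpose A ** A ** mat_sqrt G))"
    (is "loewner_le ?E (mat 1 - ?c *\<^sub>R ?H)")
proof -
  let ?lam = "lambda_max (A ** G ** transpose A)"
  have "sym_mat ?E"
    using inv by (intro sym_mat_expectation[OF meas])
      (auto elim!: eventually_mono dest: orth_projector_T_hat[OF G] orth_projector_sym_mat)
  moreover have "sym_mat ?H"
    using transpose_mat_sqrt[OF G] by (simp add: sym_mat_def matrix_transpose_mul matrix_mul_assoc)
  moreover have "v \<bullet> (?E *v v) \<le> v \<bullet> ((mat 1 - ?c *\<^sub>R ?H) *v v)" for v
  proof -
    define w where "w = A *v (mat_sqrt G *v v)"
    define q where "q j \<omega> = (w \<bullet> column j (Om \<omega>))^2 / (column j (Om \<omega>) \<bullet> column j (Om \<omega>))" for j \<omega>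
    have q: "integrable M (q j)" "integral\<^sup>L M (q j) = (w \<bullet> w) / real CARD('m)" for j
      unfolding q_def by (rule integrable_inner_column_sq_div integral_inner_column_sq_div)+
    have "v \<bullet> (?E *v v) = integral\<^sup>L M (\<lambda>\<omega>. v \<bullet> (T_hat A G (Om \<omega>) *v v))"
      by (rule quadratic_form_mat_expectation[OF int])
    also have "\<dots> \<le> integral\<^sup>L M (\<lambda>\<omega>. v \<bullet> v - q undefined \<omega> / ?lam)"
    proof (rule integral_mono_AE)
      show "AE \<omega> in M. v \<bullet> (T_hat A G (Om \<omega>) *v v) \<le> v \<bullet> v - q undefined \<omega> / ?lam"
        using inv
      proof eventually_elim
        case (elim \<omega>)
        show ?case using quadratic_form_T_hat_le[OF G elim, of v undefined] by (simp add: q_def w_def mult.commute)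
      qed
    qed (simp_all add: integrable_quadratic_form[OF int] q)
    also have "\<dots> = v \<bullet> v - (w \<bullet> w) / (real CARD('m) * ?lam)"
      by (simp add: q prob_space)
    also have "\<dots> = v \<bullet> ((mat 1 - ?c *\<^sub>R ?H) *v v)"
      by (simp add: matrix_vector_mult_diff_rdistrib inner_diff_right scaleR_matrix_vector_assoc[symmetric]
          quadratic_form_sqrt_gram[OF G] w_def)
    finally show ?thesis .
  qed
  ultimately show ?thesis
    by (auto simp: loewner_le_def psd_mat_def sym_mat_def transpose_diff transpose_scalar
        matrix_vector_mult_diff_rdistrib inner_diff_right)
qed

end

theorem mainTheorem6:
  fixes A :: "real^'n^'m" and G :: "real^'n^'n"
    and M :: "'s measure" and \<Omega> :: "'s \<Rightarrow> real^'l^'m"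
  assumes "CARD('n) \<le> CARD('m)"
    and "rank A = CARD('n)"
    and "pd_mat G"
    and "CARD('l) \<le> CARD('n)"
    and "prob_space M"
    and "prob_space.indep_vars M (\<lambda>_. borel) (\<lambda>(i, j) \<omega>. \<Omega> \<omega> $ i $ j) UNIV"
    and "\<And>i j. distributed M lborel (\<lambda>\<omega>. \<Omega> \<omega> $ i $ j) std_normal_density"
  shows "(AE \<omega> in M. invertible (transpose (\<Omega> \<omega>) ** A ** G ** transpose A ** \<Omega> \<omega>))
    \<and> (AE \<omega> in M. orth_projector (T_hat A G (\<Omega> \<omega>)))
    \<and> (\<forall>i j. integrable M (\<lambda>\<omega>. T_hat A G (\<Omega> \<omega>) $ i $ j))
    \<and> loewner_le (mat_expectation M (\<lambda>\<omega>. T_hat A G (\<Omega> \<omega>)))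
         (mat 1 - (1 / (real CARD('m) * lambda_max (A ** G ** transpose A)))
                   *\<^sub>R (mat_sqrt G ** transpose A ** A ** mat_sqrt G))
    \<and> loewner_less
         (mat 1 - (1 / (real CARD('m) * lambda_max (A ** G ** transpose A)))
                   *\<^sub>R (mat_sqrt G ** transpose A ** A ** mat_sqrt G))
         (mat 1)"
proof -
  interpret std_gaussian_matrix M \<Omega>
    using assms(5-7) by (simp add: std_gaussian_matrix_def std_gaussian_matrix_axioms_def)
  have G: "psd_mat G" using assms(3) by (rule pd_mat_imp_psd_mat)
  have A: "inj ((*v) A)" using assms(2) by (simp add: full_rank_injective)
  have inv: "AE \<omega> in M. invertible (transpose (\<Omega> \<omega>) ** A ** G ** transpose A ** \<Omega> \<omega>)"
    unfolding gram_sketch[OF G]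
    by (rule AE_invertible_gram[OF inj_transpose_mat_sqrt_mult[OF assms(3) A] assms(4)])
  have proj: "AE \<omega> in M. orth_projector (T_hat A G (\<Omega> \<omega>))"
    using inv by eventually_elim (rule orth_projector_T_hat[OF G])
  have meas: "(\<lambda>\<omega>. T_hat A G (\<Omega> \<omega>)) \<in> borel_measurable M"
    unfolding T_hat_def by measurable
  have int: "integrable M (\<lambda>\<omega>. T_hat A G (\<Omega> \<omega>) $ i $ j)" for i j
    using meas proj by (rule integrable_entry_if_AE_orth_projector)
  have "0 < 1 / (real CARD('m) * lambda_max (A ** G ** transpose A))"
    using lambda_max_sketch_pos[OF assms(3) A] by simp
  then show ?thesis
    using inv proj int loewner_le_expectation_T_hat[OF G inv int meas]
      loewner_less_mat_1_diff[OF pd_mat_sqrt_gram[OF assms(3) A]]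
    by blast
qed

end
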